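(* Let $1\le T$ and $n\ge1$. Let $f_1,\dots,f_T\in\mathbb{R}^n$ be fixed vectors, $F=[f_1,\dots,f_T]\in\mathbb{R}^{n\times T}$, and let $\Lambda=(\lambda_{st})$, $\Gamma=(\gamma_{st})$ be strictly upper triangular $T\times T$ matrices. Let $A\sim\mathsf{GOE}(n)$ and define $x_t=Af_t+\sum_{s<t}\lambda_{st}x_s$ for $t\in[T]$. Let $\Sigma$ be a $T\times T$ positive semidefinite matrix, $(w_t)_{t\in[T]}$ a mean-zero Gaussian process in $\mathbb{R}^n$ with $\operatorname{cov}(w_s,w_t)=\Sigma_{st}\mathrm{I}_n$, and $y_t=\sum_{s<t}\gamma_{st}y_s+w_t$. Then for all $t\in[T]$, $$W_2^2\big(\mathcal L(x_t),\mathcal L(y_t)\big)=\tfrac{n-1}{n}(\sqrt2-1)^2\alpha_t^2+n\Big(\big(1+\tfrac{\sqrt2-1}{n}\big)\alpha_t-\beta_t\Big)^2,$$ where $$\alpha_t=\sqrt{\big[(\mathrm{I}-\Lambda)^{-\top}\tfrac1nF^\top F(\mathrm{I}-\Lambda)^{-1}\big]_{tt}},\qquad \beta_t=\sqrt{\big[(\mathrm{I}-\Gamma)^{-\top}\Sigma(\mathrm{I}-\Gamma)^{-1}\big]_{tt}}.$$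
   Context: $\mathsf{GOE}(n)$ denotes the law of a symmetric $n\times n$ random matrix with independent $\mathsf{N}(0,2/n)$ diagonal entries and independent $\mathsf{N}(0,1/n)$ entries below the diagonal. $\mathcal L(\cdot)$ denotes the law of a random vector. The quadratic Wasserstein distance between square-integrable probability measures $\mu,\nu$ on $\mathbb{R}^d$ is $W_2(\mu,\nu)=\big(\inf_{\pi\in\Pi(\mu,\nu)}\int\|u-v\|^2\,d\pi(u,v)\big)^{1/2}$, where $\Pi(\mu,\nu)$ is the set of couplings of $\mu$ and $\nu$. *)

theory Defs
  imports "HOL-Probability.Probability"
begin

definition normal_rv :: "'w measure \<Rightarrow> ('w \<Rightarrow> real) \<Rightarrow> real \<Rightarrow> real \<Rightarrow> bool" where
  "normal_rv M Z m v \<longleftrightarrow>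
     (if v = 0 then Z \<in> borel_measurable M \<and> (AE \<omega> in M. Z \<omega> = m)
      else 0 < v \<and> distributed M lborel Z (normal_density m (sqrt v)))"

text \<open>Row i, column j of a matrix B is B $ i $ j.\<close>
definition is_GOE :: "'w measure \<Rightarrow> ('w \<Rightarrow> real^('n::{finite,linorder})^('n::{finite,linorder})) \<Rightarrow> bool" where
  "is_GOE M A \<longleftrightarrow>
     A \<in> borel_measurable M \<and>
     (\<forall>\<omega>\<in>space M. \<forall>i j. A \<omega> $ i $ j = A \<omega> $ j $ i) \<and>
     prob_space.indep_vars M (\<lambda>_. borel) (\<lambda>(i,j) \<omega>. A \<omega> $ i $ j) {(i,j). j \<le> i} \<and>
     (\<forall>i. distributed M lborel (\<lambda>\<omega>. A \<omega> $ i $ i) (normal_density 0 (sqrt (2 / real CARD('n))))) \<and>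
     (\<forall>i j. j < i \<longrightarrow> distributed M lborel (\<lambda>\<omega>. A \<omega> $ i $ j) (normal_density 0 (sqrt (1 / real CARD('n)))))"

text \<open>Mean-zero Gaussian process (w_t) in R^n with cov(w_s,w_t) = Sigma_st I_n:
  every linear combination of the coordinates is normal with mean 0 and the
  corresponding variance.\<close>
definition gaussian_process_cov ::
  "'w measure \<Rightarrow> ('t::finite \<Rightarrow> 'w \<Rightarrow> real^'n::finite) \<Rightarrow> real^'t^'t \<Rightarrow> bool" where
  "gaussian_process_cov M w \<Sigma> \<longleftrightarrow>
     (\<forall>t. w t \<in> borel_measurable M) \<and>
     (\<forall>c :: 't \<Rightarrow> 'n \<Rightarrow> real.
        normal_rv M (\<lambda>\<omega>. \<Sum>t\<in>UNIV. \<Sum>i\<in>UNIV. c t i * (w t \<omega> $ i)) 0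
          (\<Sum>s\<in>UNIV. \<Sum>t\<in>UNIV. \<Sum>i\<in>UNIV. c s i * c t i * (\<Sigma> $ s $ t)))"

definition psd_matrix :: "real^('t::finite)^('t::finite) \<Rightarrow> bool" where
  "psd_matrix S \<longleftrightarrow> transpose S = S \<and> (\<forall>c :: real^'t. 0 \<le> c \<bullet> (S *v c))"

definition strictly_upper :: "real^('t::{finite,linorder})^('t::{finite,linorder}) \<Rightarrow> bool" where
  "strictly_upper L \<longleftrightarrow> (\<forall>s t. t \<le> s \<longrightarrow> L $ s $ t = 0)"

definition couplings :: "'a::euclidean_space measure \<Rightarrow> 'a measure \<Rightarrow> ('a \<times> 'a) measure set" where
  "couplings \<mu> \<nu> = {\<pi>. sets \<pi> = sets (borel \<Otimes>\<^sub>M borel) \<and> prob_space \<pi> \<and>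
       distr \<pi> borel fst = \<mu> \<and> distr \<pi> borel snd = \<nu>}"

definition W2_sq :: "'a::euclidean_space measure \<Rightarrow> 'a measure \<Rightarrow> ennreal" where
  "W2_sq \<mu> \<nu> = (INF \<pi>\<in>couplings \<mu> \<nu>. \<integral>\<^sup>+ p. ennreal ((norm (fst p - snd p))\<^sup>2) \<partial>\<pi>)"

end

theory Submission
  imports Defs
begin

(*
  The recursion for x is linear, so x_t = A v with v = sum_s [(I - Lambda)^-1]_st f_s. For a GOE
  matrix, a . (A v) is normal with variance (|a|^2 |v|^2 + (a . v)^2) / n, so the law of x_t is the
  centered Gaussian with covariance alpha^2 (I + u u^T), where alpha = |v| / sqrt n and u = v / |v|;
  likewise y_t is centered Gaussian with covariance beta^2 I. The squared W2 distance between
  these two laws is (sqrt 2 alpha - beta)^2 + (n - 1) (alpha - beta)^2, which is the paper's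
  expression rearranged. The linear map scaling by beta / alpha and shrinking the direction u by
  1 / sqrt 2 yields a coupling with this cost; the matching lower bound for an arbitrary coupling
  follows from AM-GM applied separately to the components along u and orthogonal to u. Gaussian
  laws are identified through their one-dimensional projections (Cramer-Wold), which is proved by
  Gaussian smoothing and Fourier inversion.
*)

section \<open>Linear recursions with strictly upper triangular coefficients\<close>

lemma invertible_mat_1_minus_strictly_upper:
  fixes L :: "real^('t::{finite,linorder})^('t::{finite,linorder})"
  assumes "strictly_upper L"
  shows "invertible (mat 1 - L)"
proof -
  have "c = 0" if ker: "(mat 1 - L) *v c = 0" for c :: "(real, 't) vec"
  proof (rule ccontr)
    assume "c \<noteq> 0"
    then have ne: "{s. c $ s \<noteq> 0} \<noteq> {}" by (auto simp: vec_eq_iff)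
    define s0 where "s0 = Max {s. c $ s \<noteq> 0}"
    have s0: "c $ s0 \<noteq> 0" using Max_in[OF finite ne] by (simp add: s0_def)
    have "L $ s0 $ t * c $ t = 0" for t
    proof (cases "t \<le> s0")
      case True then show ?thesis using assms by (simp add: strictly_upper_def)
    next
      case False then show ?thesis using Max_ge[of "{s. c $ s \<noteq> 0}" t] by (force simp: s0_def)
    qed
    then have "(\<Sum>t\<in>UNIV. L $ s0 $ t * c $ t) = 0"
      by (intro sum.neutral ballI)
    then have "((mat 1 - L) *v c) $ s0 = c $ s0"
      by (simp add: matrix_vector_mult_def mat_def left_diff_distrib sum_subtractf
          if_distrib[of "\<lambda>a. a * _"] cong: if_cong)
    then show False using ker s0 by simp
  qed
  then show ?thesis
    using matrix_left_invertible_ker invertible_left_inverse by blast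
qed

lemma matrix_inv_right:
  fixes A :: "real^'n^'n"
  assumes "invertible A"
  shows "A ** matrix_inv A = mat 1"
  using assms unfolding invertible_def matrix_inv_def by (rule someI_ex[THEN conjunct1])

lemma strictly_upper_recursion_solution:
  fixes L :: "real^('t::{finite,linorder})^('t::{finite,linorder})" and z g :: "'t \<Rightarrow> 'v::real_vector"
  assumes L: "strictly_upper L"
    and rec: "\<And>t. z t = g t + (\<Sum>s\<in>{s. s < t}. L $ s $ t *\<^sub>R z s)"
  shows "z t = (\<Sum>s\<in>UNIV. matrix_inv (mat 1 - L) $ s $ t *\<^sub>R g s)"
proof -
  define D where "D = mat 1 - L"
  define C where "C = matrix_inv D"
  have DC: "D ** C = mat 1"
    unfolding C_def D_def by (rule matrix_inv_right[OF invertible_mat_1_minus_strictly_upper[OF L]])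
  have g: "g s = (\<Sum>r\<in>UNIV. D $ r $ s *\<^sub>R z r)" for s
  proof -
    have "(\<Sum>r\<in>UNIV. L $ r $ s *\<^sub>R z r) = (\<Sum>r\<in>{r. r < s}. L $ r $ s *\<^sub>R z r)"
      by (rule sum.mono_neutral_right) (use L in \<open>auto simp: strictly_upper_def not_less\<close>)
    moreover have "(\<Sum>r\<in>UNIV. (if r = s then 1 else 0) *\<^sub>R z r) = z s"
      by (simp add: if_distrib[of "\<lambda>a. a *\<^sub>R _"] cong: if_cong)
    ultimately show ?thesis
      using rec[of s] by (simp add: D_def mat_def scaleR_diff_left sum_subtractf)
  qed
  have "(\<Sum>s\<in>UNIV. C $ s $ t *\<^sub>R g s) = (\<Sum>r\<in>UNIV. (\<Sum>s\<in>UNIV. D $ r $ s * C $ s $ t) *\<^sub>R z r)"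
    by (simp add: g scaleR_sum_right scaleR_sum_left mult.commute) (rule sum.swap)
  also have "\<dots> = (\<Sum>r\<in>UNIV. (if r = t then 1 else 0) *\<^sub>R z r)"
    using DC by (simp add: matrix_matrix_mult_def mat_def vec_eq_iff)
  also have "\<dots> = z t"
    by (simp add: if_distrib[of "\<lambda>a. a *\<^sub>R _"] cong: if_cong)
  finally show ?thesis by (simp add: C_def D_def)
qed

lemma transpose_mult_mult_diag:
  fixes C G :: "real^'t^'t"
  shows "(transpose C ** G ** C) $ t $ t = column t C \<bullet> (G *v column t C)"
  by (simp add: matrix_matrix_mult_def matrix_vector_mult_def transpose_def column_def inner_vec_def
      sum_distrib_left sum_distrib_right mult_ac)
    (subst sum.swap, simp add: mult_ac)

lemma column_Gram_quadratic_form: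
  fixes F :: "real^'t^'n" and f :: "'t \<Rightarrow> real^'n"
  assumes "\<And>i s. F $ i $ s = f s $ i"
  shows "c \<bullet> ((transpose F ** F) *v c) = (norm (\<Sum>s\<in>UNIV. c $ s *\<^sub>R f s))\<^sup>2"
proof -
  have "F *v c = (\<Sum>s\<in>UNIV. c $ s *\<^sub>R f s)"
    by (simp add: vec_eq_iff matrix_vector_mult_def assms sum_component mult.commute)
  moreover have "c \<bullet> ((F *v c) v* F) = (F *v c) \<bullet> (F *v c)"
    by (simp add: inner_commute[of c] dot_lmul_matrix)
  ultimately show ?thesis
    by (simp add: matrix_vector_mul_assoc[symmetric] power2_norm_eq_inner)
qed

lemma matrix_vector_mult_sum_scaleR:
  fixes B :: "real^'n^'m"
  shows "B *v (\<Sum>s\<in>S. c s *\<^sub>R v s) = (\<Sum>s\<in>S. c s *\<^sub>R (B *v v s))"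
  by (simp add: vec_eq_iff matrix_vector_mult_def sum_distrib_left sum_component algebra_simps)
    (subst sum.swap, simp add: sum_distrib_left mult.left_commute)

section \<open>Centered Gaussian laws on Euclidean spaces\<close>

definition centered_normal :: "real \<Rightarrow> real measure" where
  "centered_normal v =
     (if v = 0 then return borel 0 else density lborel (\<lambda>x. ennreal (normal_density 0 (sqrt v) x)))"

lemma sets_centered_normal [simp, measurable_cong]: "sets (centered_normal v) = sets borel"
  by (simp add: centered_normal_def)

lemma distr_normal_rv:
  assumes "prob_space M" and "normal_rv M Z 0 v"
  shows "distr M borel Z = centered_normal v"
proof (cases "v = 0")
  case True
  interpret prob_space M by fact
  from assms True have [measurable]: "Z \<in> borel_measurable M" and "AE \<omega> in M. Z \<omega> = 0"
    by (auto simp: normal_rv_def)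
  then have "distr M borel Z = distr M borel (\<lambda>_. 0)"
    by (intro distr_cong_AE) auto
  then show ?thesis using True by (simp add: centered_normal_def)
next
  case False
  with assms have "distr M lborel Z = density lborel (\<lambda>x. ennreal (normal_density 0 (sqrt v) x))"
    by (simp add: normal_rv_def distributed_def)
  moreover have "distr M borel Z = distr M lborel Z"
    by (rule distr_cong) auto
  ultimately show ?thesis using False by (simp add: centered_normal_def)
qed

lemma centered_normal_second_moment:
  assumes "0 \<le> v"
  shows "integrable (centered_normal v) (\<lambda>x. x\<^sup>2)" and "(\<integral>x. x\<^sup>2 \<partial>centered_normal v) = v"
proof -
  have "integrable (centered_normal v) (\<lambda>x. x\<^sup>2) \<and> (\<integral>x. x\<^sup>2 \<partial>centered_normal v) = v"
  proof (cases "v = 0")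
    case True
    have "AE x in return borel (0::real). x\<^sup>2 = 0"
      by (simp add: AE_return)
    then have "integrable (return borel (0::real)) (\<lambda>x. x\<^sup>2)"
      by (subst integrable_cong_AE[where g="\<lambda>_. 0"]) auto
    then show ?thesis using True by (simp add: centered_normal_def integral_return)
  next
    case False
    with assms have v: "0 < v" by simp
    have "integrable lborel (\<lambda>x. normal_density 0 (sqrt v) x * (x - 0) ^ 2)"
      by (rule integrable_normal_moment) (simp add: v)
    moreover have "(\<integral>x. normal_density 0 (sqrt v) x * (x - 0) ^ (2 * 1) \<partial>lborel) =
        fact (2 * 1) / ((2 / (sqrt v)\<^sup>2) ^ 1 * fact 1)"
      by (rule integral_normal_moment_even) (simp add: v)
    ultimately show ?thesis
      using v by (simp add: centered_normal_def integrable_density integral_density)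
  qed
  then show "integrable (centered_normal v) (\<lambda>x. x\<^sup>2)" and "(\<integral>x. x\<^sup>2 \<partial>centered_normal v) = v"
    by auto
qed

lemma normal_rv_cong:
  assumes "normal_rv M Z m v" and "\<And>\<omega>. \<omega> \<in> space M \<Longrightarrow> Z \<omega> = Z' \<omega>"
  shows "normal_rv M Z' m v"
proof -
  have "Z \<in> borel_measurable M \<longleftrightarrow> Z' \<in> borel_measurable M"
    and "Z \<in> M \<rightarrow>\<^sub>M lborel \<longleftrightarrow> Z' \<in> M \<rightarrow>\<^sub>M lborel"
    by (auto intro!: measurable_cong simp: assms(2))
  moreover have "distr M lborel Z = distr M lborel Z'"
    by (rule distr_cong) (auto simp: assms(2))
  moreover have "(AE \<omega> in M. Z \<omega> = m) \<longleftrightarrow> (AE \<omega> in M. Z' \<omega> = m)"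
    by (rule AE_cong) (simp add: assms(2))
  ultimately show ?thesis using assms(1)
    by (auto simp: normal_rv_def distributed_def)
qed

lemma normal_rv_nonneg: "normal_rv M Z m v \<Longrightarrow> 0 \<le> v"
  by (auto simp: normal_rv_def split: if_splits)

lemma normal_rv_sum_indep:
  fixes X :: "'i \<Rightarrow> 'w \<Rightarrow> real"
  assumes "prob_space M" and "finite I" and ind: "prob_space.indep_vars M (\<lambda>_. borel) X I"
    and distr: "\<And>i. i \<in> I \<Longrightarrow> distributed M lborel (X i) (normal_density 0 (\<sigma> i))"
    and pos: "\<And>i. i \<in> I \<Longrightarrow> 0 < \<sigma> i"
  shows "normal_rv M (\<lambda>\<omega>. \<Sum>i\<in>I. c i * X i \<omega>) 0 (\<Sum>i\<in>I. (c i)\<^sup>2 * (\<sigma> i)\<^sup>2)"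
proof -
  interpret prob_space M by fact
  define J where "J = {i\<in>I. c i \<noteq> 0}"
  have J: "finite J" "J \<subseteq> I" using \<open>finite I\<close> by (auto simp: J_def)
  have sum_J: "(\<lambda>\<omega>. \<Sum>i\<in>I. c i * X i \<omega>) = (\<lambda>\<omega>. \<Sum>i\<in>J. c i * X i \<omega>)"
    "(\<Sum>i\<in>I. (c i)\<^sup>2 * (\<sigma> i)\<^sup>2) = (\<Sum>i\<in>J. (c i)\<^sup>2 * (\<sigma> i)\<^sup>2)"
    by (auto intro!: sum.mono_neutral_right \<open>finite I\<close> J simp: J_def)
  show ?thesis
  proof (cases "J = {}")
    case True
    then show ?thesis unfolding sum_J by (simp add: normal_rv_def)
  next
    case False
    have "distributed M lborel (\<lambda>\<omega>. 0 + c i * X i \<omega>) (normal_density (0 + c i * 0) (\<bar>c i\<bar> * \<sigma> i))"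
      if "i \<in> J" for i
      by (rule normal_density_affine) (use that J distr pos in \<open>auto simp: J_def\<close>)
    moreover have "indep_vars (\<lambda>_. borel) (\<lambda>i \<omega>. c i * X i \<omega>) J"
      by (rule indep_vars_compose2[where X=X]) (use indep_vars_subset[OF ind J(2)] in auto)
    ultimately have "distributed M lborel (\<lambda>\<omega>. \<Sum>i\<in>J. c i * X i \<omega>)
        (normal_density (\<Sum>i\<in>J. 0) (sqrt (\<Sum>i\<in>J. (\<bar>c i\<bar> * \<sigma> i)\<^sup>2)))"
      using J pos False by (intro sum_indep_normal) (auto simp: J_def)
    moreover have "0 < (\<Sum>i\<in>J. (c i)\<^sup>2 * (\<sigma> i)\<^sup>2)"
      using J pos False by (intro sum_pos) (auto simp: J_def intro!: mult_pos_pos dest!: pos)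
    ultimately show ?thesis unfolding sum_J
      by (simp add: normal_rv_def power_mult_distrib)
  qed
qed

text \<open>A centered Gaussian law is encoded by the variances \<open>q a\<close> of its projections \<open>z \<mapsto> a \<bullet> z\<close>,
  i.e.\ by the quadratic form of its covariance.\<close>
definition gaussian_law :: "'a::euclidean_space measure \<Rightarrow> ('a \<Rightarrow> real) \<Rightarrow> bool" where
  "gaussian_law \<mu> q \<longleftrightarrow> prob_space \<mu> \<and> sets \<mu> = sets borel \<and>
     (\<forall>a. 0 \<le> q a \<and> distr \<mu> borel (\<lambda>z. a \<bullet> z) = centered_normal (q a))"

lemma has_bochner_integral_gaussian_law_inner:
  assumes "gaussian_law \<mu> q"
  shows "has_bochner_integral \<mu> (\<lambda>z. (a \<bullet> z)\<^sup>2) (q a)"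
proof -
  from assms have [measurable_cong]: "sets \<mu> = sets borel"
    and q: "0 \<le> q a" and law: "distr \<mu> borel (\<lambda>z. a \<bullet> z) = centered_normal (q a)"
    by (auto simp: gaussian_law_def)
  have "integrable \<mu> (\<lambda>z. (a \<bullet> z)\<^sup>2)"
    using centered_normal_second_moment(1)[OF q] by (simp add: law[symmetric] integrable_distr_eq)
  moreover have "(\<integral>x. x\<^sup>2 \<partial>distr \<mu> borel (\<lambda>z. a \<bullet> z)) = (\<integral>z. (a \<bullet> z)\<^sup>2 \<partial>\<mu>)"
    by (rule integral_distr) auto
  ultimately show ?thesis
    using centered_normal_second_moment(2)[OF q] by (simp add: law has_bochner_integral_iff)
qed

lemma has_bochner_integral_gaussian_law_norm:
  assumes "gaussian_law \<mu> q"
  shows "has_bochner_integral \<mu> (\<lambda>z. (norm z)\<^sup>2) (\<Sum>b\<in>Basis. q b)"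
proof -
  have "(norm z)\<^sup>2 = (\<Sum>b\<in>Basis. (b \<bullet> z)\<^sup>2)" for z :: 'a
    unfolding power2_norm_eq_inner by (subst euclidean_inner) (simp add: power2_eq_square inner_commute)
  then show ?thesis
    by (simp add: has_bochner_integral_sum has_bochner_integral_gaussian_law_inner[OF assms])
qed

lemma gaussian_law_distr_linear:
  fixes T :: "'a::euclidean_space \<Rightarrow> 'b::euclidean_space"
  assumes "gaussian_law \<mu> q" and "linear T"
  shows "gaussian_law (distr \<mu> borel T) (\<lambda>a. q (adjoint T a))"
proof -
  from assms(1) have P: "prob_space \<mu>" and [measurable_cong]: "sets \<mu> = sets borel"
    and law: "\<And>a. 0 \<le> q a \<and> distr \<mu> borel (\<lambda>z. a \<bullet> z) = centered_normal (q a)"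
    by (auto simp: gaussian_law_def)
  have [measurable]: "T \<in> borel_measurable borel"
    using assms(2)
    by (intro borel_measurable_continuous_onI linear_continuous_on)
      (simp add: linear_conv_bounded_linear)
  have "distr (distr \<mu> borel T) borel (\<lambda>z. a \<bullet> z) = distr \<mu> borel (\<lambda>z. adjoint T a \<bullet> z)" for a
    by (subst distr_distr) (auto simp: comp_def adjoint_clauses[OF assms(2)] intro!: distr_cong)
  moreover have "prob_space (distr \<mu> borel T)"
    by (rule prob_space.prob_space_distr[OF P]) simp
  ultimately show ?thesis
    using law by (simp add: gaussian_law_def)
qed

lemma gaussian_law_distrI:
  fixes X :: "'w \<Rightarrow> 'a::euclidean_space"
  assumes "prob_space M" and [measurable]: "X \<in> borel_measurable M"
    and normal: "\<And>a. normal_rv M (\<lambda>\<omega>. a \<bullet> X \<omega>) 0 (q a)"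
  shows "gaussian_law (distr M borel X) q"
proof -
  have "distr (distr M borel X) borel (\<lambda>z. a \<bullet> z) = distr M borel (\<lambda>\<omega>. a \<bullet> X \<omega>)" for a
    by (subst distr_distr) (simp_all add: comp_def)
  moreover have "prob_space (distr M borel X)"
    by (rule prob_space.prob_space_distr[OF assms(1)]) simp
  ultimately show ?thesis
    using distr_normal_rv[OF assms(1) normal] normal_rv_nonneg[OF normal]
    by (simp add: gaussian_law_def)
qed

section \<open>The Cramer--Wold theorem\<close>

lemma integral_lborel_prod:
  fixes f :: "'a::euclidean_space \<Rightarrow> real \<Rightarrow> 'b::{real_normed_field,banach,second_countable_topology}"
  assumes "\<And>b. b \<in> Basis \<Longrightarrow> integrable lborel (f b)"
  shows "(\<integral>x. (\<Prod>b\<in>Basis. f b (x \<bullet> b)) \<partial>(lborel::'a measure)) = (\<Prod>b\<in>Basis. \<integral>x. f b x \<partial>lborel)"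
proof -
  interpret product_sigma_finite "\<lambda>_::'a. lborel::real measure" by standard
  have [measurable]: "\<And>b. b \<in> Basis \<Longrightarrow> f b \<in> borel_measurable borel"
    using assms by (metis borel_measurable_integrable sets_lborel measurable_cong_sets)
  have "(\<integral>x. (\<Prod>b\<in>Basis. f b (x \<bullet> b)) \<partial>(lborel::'a measure))
     = (\<integral>x. (\<Prod>b\<in>Basis. f b ((\<Sum>b'\<in>Basis. x b' *\<^sub>R b') \<bullet> b)) \<partial>(\<Pi>\<^sub>M b\<in>Basis. lborel))"
    by (subst lborel_eq, rule integral_distr) measurable
  also have "\<dots> = (\<integral>x. (\<Prod>b\<in>Basis. f b (x b)) \<partial>(\<Pi>\<^sub>M b\<in>Basis. lborel))"
    by (intro Bochner_Integration.integral_cong prod.cong refl)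
      (simp add: inner_sum_left inner_Basis if_distrib cong: if_cong)
  also have "\<dots> = (\<Prod>b\<in>Basis. \<integral>x. f b x \<partial>lborel)"
    by (rule product_integral_prod) (use assms in auto)
  finally show ?thesis .
qed

lemma nn_integral_lborel_affine:
  fixes x :: "'a::euclidean_space"
  assumes "c \<noteq> 0" and [measurable]: "h \<in> borel_measurable borel"
  shows "(\<integral>\<^sup>+a. h a \<partial>lborel) = ennreal (\<bar>c\<bar> ^ DIM('a)) * (\<integral>\<^sup>+b. h (x + c *\<^sub>R b) \<partial>lborel)"
  by (subst lborel_affine[OF assms(1), of x])
    (simp add: nn_integral_density nn_integral_distr nn_integral_cmult)

lemma integral_lborel_affine:
  fixes x :: "'a::euclidean_space" and h :: "'a \<Rightarrow> real"
  assumes "c \<noteq> 0" and [measurable]: "h \<in> borel_measurable borel"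
  shows "(\<integral>a. h a \<partial>lborel) = \<bar>c\<bar> ^ DIM('a) * (\<integral>b. h (x + c *\<^sub>R b) \<partial>lborel)"
proof -
  have "(\<integral>a. h a \<partial>lborel) = (\<integral>a. \<bar>c\<bar> ^ DIM('a) * h a \<partial>distr lborel borel (\<lambda>b. x + c *\<^sub>R b))"
    by (subst lborel_affine[OF assms(1), of x]) (simp add: integral_density)
  also have "\<dots> = (\<integral>b. \<bar>c\<bar> ^ DIM('a) * h (x + c *\<^sub>R b) \<partial>lborel)"
    by (rule integral_distr) measurable
  finally show ?thesis by simp
qed

lemma integrable_pair_measureI:
  fixes f :: "_ \<Rightarrow> _::{banach, second_countable_topology}"
  assumes "sigma_finite_measure M2" and [measurable]: "f \<in> borel_measurable (M1 \<Otimes>\<^sub>M M2)"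
    and "(\<integral>\<^sup>+ x. \<integral>\<^sup>+ y. norm (f (x, y)) \<partial>M2 \<partial>M1) < \<infinity>"
  shows "integrable (M1 \<Otimes>\<^sub>M M2) f"
proof -
  interpret M2: sigma_finite_measure M2 by fact
  have "(\<integral>\<^sup>+ x. \<integral>\<^sup>+ y. norm (f (x, y)) \<partial>M2 \<partial>M1) = (\<integral>\<^sup>+ z. norm (f z) \<partial>(M1 \<Otimes>\<^sub>M M2))"
    by (rule M2.nn_integral_fst) measurable
  with assms(3) show ?thesis unfolding integrable_iff_bounded by simp
qed

definition std_gauss_density :: "'a::euclidean_space \<Rightarrow> real" where
  "std_gauss_density g = (\<Prod>b\<in>Basis. std_normal_density (g \<bullet> b))"

lemma std_gauss_density_measurable [measurable]: "std_gauss_density \<in> borel_measurable borel"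
  unfolding std_gauss_density_def by measurable

lemma std_gauss_density_nonneg: "0 \<le> std_gauss_density g"
  by (simp add: std_gauss_density_def prod_nonneg)

lemma nn_integral_std_gauss_density:
  "(\<integral>\<^sup>+g. ennreal (std_gauss_density g) \<partial>(lborel::'a::euclidean_space measure)) = 1"
proof -
  have "(\<integral>\<^sup>+g. ennreal (std_gauss_density g) \<partial>(lborel::'a measure)) =
      (\<integral>\<^sup>+g. (\<Prod>b\<in>Basis. ennreal (std_normal_density (g \<bullet> b))) \<partial>(lborel::'a measure))"
    by (simp add: std_gauss_density_def prod_ennreal)
  also have "\<dots> = (\<Prod>b\<in>(Basis::'a set). \<integral>\<^sup>+x. ennreal (std_normal_density x) \<partial>lborel)"
    by (rule nn_integral_lborel_prod) auto
  also have "\<dots> = 1"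
    by (simp add: nn_integral_eq_integral)
  finally show ?thesis .
qed

lemma integrable_std_gauss_density: "integrable lborel (std_gauss_density :: 'a::euclidean_space \<Rightarrow> real)"
  unfolding integrable_iff_bounded
  using nn_integral_std_gauss_density[where 'a='a] by (simp add: std_gauss_density_nonneg)

lemma integral_std_gauss_density: "(\<integral>g. std_gauss_density g \<partial>(lborel::'a::euclidean_space measure)) = 1"
  using nn_integral_std_gauss_density[where 'a='a] integrable_std_gauss_density[where 'a='a]
  by (subst (asm) nn_integral_eq_integral) (auto simp: std_gauss_density_nonneg)

lemma fourier_std_gauss_density:
  "(\<integral>g. std_gauss_density g * cos (z \<bullet> g) \<partial>(lborel::'a::euclidean_space measure)) =
     sqrt (2 * pi) ^ DIM('a) * std_gauss_density z"
proof -
  have char: "(\<integral>x. complex_of_real (std_normal_density x) * iexp (t * x) \<partial>lborel) =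
      complex_of_real (exp (- t\<^sup>2 / 2))" for t
  proof -
    have "char std_normal_distribution t =
        (\<integral>x. complex_of_real (std_normal_density x) * iexp (t * x) \<partial>lborel)"
      unfolding char_def by (subst integral_density) (auto simp: scaleR_conv_of_real)
    then show ?thesis by (simp add: char_std_normal_distribution)
  qed
  have "iexp (z \<bullet> g) = (\<Prod>b\<in>Basis. iexp ((z \<bullet> b) * (g \<bullet> b)))" for g :: 'a
    by (simp add: euclidean_inner[of z g] exp_sum[symmetric] sum_distrib_left)
  then have "(\<integral>g. complex_of_real (std_gauss_density g) * iexp (z \<bullet> g) \<partial>(lborel::'a measure)) =
      (\<integral>g. (\<Prod>b\<in>Basis. complex_of_real (std_normal_density (g \<bullet> b)) * iexp ((z \<bullet> b) * (g \<bullet> b)))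
        \<partial>(lborel::'a measure))"
    by (simp add: std_gauss_density_def prod.distrib)
  also have "\<dots> = (\<Prod>b\<in>(Basis::'a set). complex_of_real (exp (- (z \<bullet> b)\<^sup>2 / 2)))"
  proof (subst integral_lborel_prod)
    show "integrable lborel (\<lambda>x. complex_of_real (std_normal_density x) * iexp ((z \<bullet> b) * x))" for b
      by (rule Bochner_Integration.integrable_bound[where f=std_normal_density]) (auto simp: norm_mult)
  qed (rule prod.cong[OF refl], rule char)
  also have "\<dots> = complex_of_real (sqrt (2 * pi) ^ DIM('a) * std_gauss_density z)"
  proof -
    have "exp (- t\<^sup>2 / 2) = sqrt (2 * pi) * std_normal_density t" for t
      by (simp add: normal_density_def)
    then show ?thesis
      by (simp add: std_gauss_density_def prod.distrib)
  qed
  finally have complex: "(\<integral>g. complex_of_real (std_gauss_density g) * iexp (z \<bullet> g) \<partial>(lborel::'a measure)) =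
      complex_of_real (sqrt (2 * pi) ^ DIM('a) * std_gauss_density z)" .
  have "integrable lborel (\<lambda>g::'a. complex_of_real (std_gauss_density g) * iexp (z \<bullet> g))"
    by (rule Bochner_Integration.integrable_bound[OF integrable_std_gauss_density])
      (auto simp: norm_mult std_gauss_density_nonneg)
  from integral_bounded_linear[OF bounded_linear_Re this] show ?thesis
    by (simp add: complex Re_exp)
qed

lemma integral_std_gauss_density_eq_of_projections:
  fixes \<mu> \<nu> :: "'a::euclidean_space measure"
  assumes "prob_space \<mu>" "prob_space \<nu>" and "sets \<mu> = sets borel" "sets \<nu> = sets borel"
    and proj: "\<And>t. distr \<mu> borel (\<lambda>x. t \<bullet> x) = distr \<nu> borel (\<lambda>x. t \<bullet> x)"
  shows "(\<integral>x. std_gauss_density (c *\<^sub>R (x - a)) \<partial>\<mu>) = (\<integral>x. std_gauss_density (c *\<^sub>R (x - a)) \<partial>\<nu>)"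
proof -
  define K where "K = sqrt (2 * pi) ^ DIM('a)"
  have fourier: "K * (\<integral>x. std_gauss_density (c *\<^sub>R (x - a)) \<partial>\<mu>) =
     (\<integral>g. std_gauss_density g * (\<integral>u. cos (c * u - c * (g \<bullet> a)) \<partial>distr \<mu> borel (\<lambda>x. g \<bullet> x)) \<partial>lborel)"
    if "prob_space \<mu>" and [measurable_cong]: "sets \<mu> = sets borel" for \<mu> :: "'a measure"
  proof -
    interpret \<mu>: prob_space \<mu> by fact
    interpret pair_sigma_finite lborel \<mu>
      by (simp add: pair_sigma_finite_def \<mu>.sigma_finite_measure_axioms lborel.sigma_finite_measure_axioms)
    have inner: "(c *\<^sub>R (x - a)) \<bullet> g = c * (g \<bullet> x) - c * (g \<bullet> a)" for x g
      by (simp add: inner_diff_left inner_diff_right right_diff_distrib inner_commute)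
    have "integrable (lborel \<Otimes>\<^sub>M \<mu>) (\<lambda>(g, x). std_gauss_density g * cos ((c *\<^sub>R (x - a)) \<bullet> g))"
    proof (rule integrable_pair_measureI)
      have "(\<integral>\<^sup>+ g. \<integral>\<^sup>+ x. ennreal (norm (std_gauss_density g * cos ((c *\<^sub>R (x - a)) \<bullet> g))) \<partial>\<mu> \<partial>lborel)
          \<le> (\<integral>\<^sup>+ g. \<integral>\<^sup>+ x. ennreal (std_gauss_density (g::'a)) \<partial>\<mu> \<partial>lborel)"
        by (intro nn_integral_mono ennreal_leI)
          (simp add: abs_mult std_gauss_density_nonneg mult_right_le_one_le)
      also have "\<dots> < \<infinity>"
        by (simp add: \<mu>.emeasure_space_1 nn_integral_std_gauss_density)
      finally show "(\<integral>\<^sup>+ g. \<integral>\<^sup>+ x. ennreal (norm (case (g, x) of (g, x) \<Rightarrow>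
          std_gauss_density g * cos ((c *\<^sub>R (x - a)) \<bullet> g))) \<partial>\<mu> \<partial>lborel) < \<infinity>"
        by simp
    qed (simp_all add: \<mu>.sigma_finite_measure_axioms)
    then have Fubini: "(\<integral>x. (\<integral>g. std_gauss_density g * cos ((c *\<^sub>R (x - a)) \<bullet> g) \<partial>lborel) \<partial>\<mu>) =
        (\<integral>g. (\<integral>x. std_gauss_density g * cos ((c *\<^sub>R (x - a)) \<bullet> g) \<partial>\<mu>) \<partial>lborel)"
      by (intro Fubini_integral) simp
    have "K * (\<integral>x. std_gauss_density (c *\<^sub>R (x - a)) \<partial>\<mu>) =
        (\<integral>x. K * std_gauss_density (c *\<^sub>R (x - a)) \<partial>\<mu>)"
      by simp
    also have "\<dots> = (\<integral>x. (\<integral>g. std_gauss_density g * cos ((c *\<^sub>R (x - a)) \<bullet> g) \<partial>lborel) \<partial>\<mu>)"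
      by (simp only: fourier_std_gauss_density K_def)
    also have "\<dots> = (\<integral>g. (\<integral>x. std_gauss_density g * cos ((c *\<^sub>R (x - a)) \<bullet> g) \<partial>\<mu>) \<partial>lborel)"
      by (rule Fubini)
    also have "\<dots> = (\<integral>g. std_gauss_density g * (\<integral>x. cos (c * (g \<bullet> x) - c * (g \<bullet> a)) \<partial>\<mu>) \<partial>lborel)"
      by (simp only: inner) simp
    also have "\<dots> = (\<integral>g. std_gauss_density g * (\<integral>u. cos (c * u - c * (g \<bullet> a)) \<partial>distr \<mu> borel (\<lambda>x. g \<bullet> x)) \<partial>lborel)"
      by (simp add: integral_distr)
    finally show ?thesis .
  qed
  have "K * (\<integral>x. std_gauss_density (c *\<^sub>R (x - a)) \<partial>\<mu>) = K * (\<integral>x. std_gauss_density (c *\<^sub>R (x - a)) \<partial>\<nu>)"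
    by (simp add: fourier assms proj)
  then show ?thesis by (simp add: K_def)
qed

lemma nn_integral_std_gauss_density_scaled:
  fixes x :: "'a::euclidean_space"
  assumes "0 < \<sigma>"
  shows "(\<integral>\<^sup>+ a. ennreal (std_gauss_density ((1 / \<sigma>) *\<^sub>R (x - a))) \<partial>lborel) = ennreal (\<sigma> ^ DIM('a))"
proof -
  have shift: "(1 / \<sigma>) *\<^sub>R (x - (x + - \<sigma> *\<^sub>R b)) = b" for b :: 'a
    using assms by (simp only: diff_add_eq_diff_diff_swap diff_self) simp
  have "(\<integral>\<^sup>+ a. ennreal (std_gauss_density ((1 / \<sigma>) *\<^sub>R (x - a))) \<partial>lborel) =
      ennreal (\<bar>- \<sigma>\<bar> ^ DIM('a)) *
        (\<integral>\<^sup>+ b. ennreal (std_gauss_density ((1 / \<sigma>) *\<^sub>R (x - (x + - \<sigma> *\<^sub>R b)))) \<partial>lborel)"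
    using assms by (intro nn_integral_lborel_affine) auto
  then show ?thesis
    using assms by (simp only: shift) (simp add: nn_integral_std_gauss_density)
qed

definition gauss_smoothing :: "real \<Rightarrow> ('a::euclidean_space \<Rightarrow> real) \<Rightarrow> 'a \<Rightarrow> real" where
  "gauss_smoothing \<sigma> f x = (\<integral>b. f (x - \<sigma> *\<^sub>R b) * std_gauss_density b \<partial>lborel)"

lemma gauss_smoothing_measurable [measurable]:
  assumes [measurable]: "f \<in> borel_measurable borel"
  shows "gauss_smoothing \<sigma> f \<in> borel_measurable borel"
  unfolding gauss_smoothing_def by measurable

lemma abs_gauss_smoothing_le:
  assumes [measurable]: "f \<in> borel_measurable borel" and bound: "\<And>x. \<bar>f x\<bar> \<le> B"
  shows "\<bar>gauss_smoothing \<sigma> f x\<bar> \<le> B"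
proof -
  have bound': "\<bar>f (x - \<sigma> *\<^sub>R b) * std_gauss_density b\<bar> \<le> B * std_gauss_density b" for b
    by (simp add: abs_mult std_gauss_density_nonneg mult_right_mono bound)
  have "\<bar>gauss_smoothing \<sigma> f x\<bar> \<le> (\<integral>b. \<bar>f (x - \<sigma> *\<^sub>R b) * std_gauss_density b\<bar> \<partial>lborel)"
    unfolding gauss_smoothing_def by (rule integral_abs_bound)
  also have "\<dots> \<le> (\<integral>b. B * std_gauss_density (b::'a) \<partial>lborel)"
  proof (rule integral_mono)
    show "integrable lborel (\<lambda>b. B * std_gauss_density (b::'a))"
      by (simp add: integrable_std_gauss_density)
    then show "integrable lborel (\<lambda>b. \<bar>f (x - \<sigma> *\<^sub>R b) * std_gauss_density b\<bar>)"
      by (rule Bochner_Integration.integrable_bound) (auto intro!: AE_I2 order_trans[OF bound'])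
  qed (rule bound')
  also have "\<dots> = B" by (simp add: integral_std_gauss_density)
  finally show ?thesis .
qed

lemma gauss_smoothing_tendsto:
  assumes "continuous_on UNIV f" and bound: "\<And>x. \<bar>f x\<bar> \<le> B"
  shows "(\<lambda>m. gauss_smoothing (1 / Suc m) f x) \<longlonglongrightarrow> f x"
proof -
  have [measurable]: "f \<in> borel_measurable borel" by (rule borel_measurable_continuous_onI[OF assms(1)])
  have "(\<lambda>m. \<integral>b. f (x - (1 / Suc m) *\<^sub>R b) * std_gauss_density b \<partial>lborel) \<longlonglongrightarrow>
      (\<integral>b. f x * std_gauss_density (b::'a) \<partial>lborel)"
  proof (rule integral_dominated_convergence[where w="\<lambda>b. B * std_gauss_density b"])
    show "AE b in lborel. (\<lambda>m. f (x - (1 / Suc m) *\<^sub>R b) * std_gauss_density b) \<longlonglongrightarrow> f x * std_gauss_density b"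
    proof (rule AE_I2)
      fix b :: 'a
      have "(\<lambda>m. x - (1 / real (Suc m)) *\<^sub>R b) \<longlonglongrightarrow> x - 0 *\<^sub>R b"
        by (intro tendsto_intros LIMSEQ_Suc[OF lim_const_over_n])
      moreover have "isCont f x"
        using assms(1) continuous_on_eq_continuous_at open_UNIV by blast
      ultimately show "(\<lambda>m. f (x - (1 / Suc m) *\<^sub>R b) * std_gauss_density b) \<longlonglongrightarrow> f x * std_gauss_density b"
        by (intro tendsto_intros isCont_tendsto_compose[where g=f]) auto
    qed
  qed (auto simp: integrable_std_gauss_density abs_mult std_gauss_density_nonneg mult_right_mono bound)
  then show ?thesis by (simp add: gauss_smoothing_def integral_std_gauss_density)
qed

lemma integral_gauss_smoothing:
  fixes \<mu> :: "'a::euclidean_space measure"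
  assumes "0 < \<sigma>" and "prob_space \<mu>" and [measurable_cong]: "sets \<mu> = sets borel"
    and [measurable]: "f \<in> borel_measurable borel" and bound: "\<And>x. \<bar>f x\<bar> \<le> B"
  shows "(\<integral>a. f a * (\<integral>x. std_gauss_density ((1 / \<sigma>) *\<^sub>R (x - a)) \<partial>\<mu>) \<partial>lborel) =
    \<sigma> ^ DIM('a) * (\<integral>x. gauss_smoothing \<sigma> f x \<partial>\<mu>)"
proof -
  interpret \<mu>: prob_space \<mu> by fact
  interpret pair_sigma_finite \<mu> lborel
    by (simp add: pair_sigma_finite_def \<mu>.sigma_finite_measure_axioms lborel.sigma_finite_measure_axioms)
  have \<sigma>: "- \<sigma> \<noteq> 0" "\<bar>- \<sigma>\<bar> = \<sigma>" using \<open>0 < \<sigma>\<close> by auto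
  have shift: "(1 / \<sigma>) *\<^sub>R (x - (x + - \<sigma> *\<^sub>R b)) = b" for x b :: 'a
    using \<open>0 < \<sigma>\<close> by (simp only: diff_add_eq_diff_diff_swap diff_self) simp
  have "integrable (\<mu> \<Otimes>\<^sub>M lborel) (\<lambda>(x, a). f a * std_gauss_density ((1 / \<sigma>) *\<^sub>R (x - a)))"
  proof (rule integrable_pair_measureI)
    have "(\<integral>\<^sup>+ x. \<integral>\<^sup>+ a. ennreal (norm (f a * std_gauss_density ((1 / \<sigma>) *\<^sub>R (x - a)))) \<partial>lborel \<partial>\<mu>)
        \<le> (\<integral>\<^sup>+ x. \<integral>\<^sup>+ a. ennreal B * ennreal (std_gauss_density ((1 / \<sigma>) *\<^sub>R (x - a))) \<partial>lborel \<partial>\<mu>)"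
      using order_trans[OF abs_ge_zero bound]
      by (intro nn_integral_mono)
        (simp add: ennreal_mult'[symmetric] abs_mult std_gauss_density_nonneg mult_right_mono bound)
    also have "\<dots> = (\<integral>\<^sup>+ x. ennreal B * ennreal (\<sigma> ^ DIM('a)) \<partial>\<mu>)"
      by (simp add: nn_integral_cmult nn_integral_std_gauss_density_scaled[OF \<open>0 < \<sigma>\<close>])
    also have "\<dots> < \<infinity>"
      by (simp add: \<mu>.emeasure_space_1 ennreal_mult_less_top)
    finally show "(\<integral>\<^sup>+ x. \<integral>\<^sup>+ a. ennreal (norm (case (x, a) of (x, a) \<Rightarrow>
        f a * std_gauss_density ((1 / \<sigma>) *\<^sub>R (x - a)))) \<partial>lborel \<partial>\<mu>) < \<infinity>"
      by simp
  qed (simp_all add: lborel.sigma_finite_measure_axioms)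
  then have "(\<integral>a. (\<integral>x. f a * std_gauss_density ((1 / \<sigma>) *\<^sub>R (x - a)) \<partial>\<mu>) \<partial>lborel) =
      (\<integral>x. (\<integral>a. f a * std_gauss_density ((1 / \<sigma>) *\<^sub>R (x - a)) \<partial>lborel) \<partial>\<mu>)"
    by (rule Fubini_integral[where f="\<lambda>x a. f a * std_gauss_density ((1 / \<sigma>) *\<^sub>R (x - a))"])
  also have "\<dots> = (\<integral>x. \<sigma> ^ DIM('a) * gauss_smoothing \<sigma> f x \<partial>\<mu>)"
  proof (rule Bochner_Integration.integral_cong[OF refl])
    fix x :: 'a
    have "(\<integral>a. f a * std_gauss_density ((1 / \<sigma>) *\<^sub>R (x - a)) \<partial>lborel) = \<bar>- \<sigma>\<bar> ^ DIM('a) *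
        (\<integral>b. f (x + - \<sigma> *\<^sub>R b) * std_gauss_density ((1 / \<sigma>) *\<^sub>R (x - (x + - \<sigma> *\<^sub>R b))) \<partial>lborel)"
      by (rule integral_lborel_affine[OF \<sigma>(1)]) measurable
    then show "(\<integral>a. f a * std_gauss_density ((1 / \<sigma>) *\<^sub>R (x - a)) \<partial>lborel) = \<sigma> ^ DIM('a) * gauss_smoothing \<sigma> f x"
      by (simp only: shift \<sigma>(2)) (simp add: gauss_smoothing_def)
  qed
  finally show ?thesis by simp
qed

text \<open>Writing the Gaussian kernel as a Fourier integral expresses \<open>\<integral> gauss_smoothing \<sigma> f d\<mu>\<close>
  through the laws of the projections of \<open>\<mu>\<close>; then let \<open>\<sigma> \<rightarrow> 0\<close>.\<close>
lemma integral_bounded_continuous_eq_of_projections: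
  fixes \<mu> \<nu> :: "'a::euclidean_space measure" and f :: "'a \<Rightarrow> real"
  assumes P: "prob_space \<mu>" "prob_space \<nu>" and S: "sets \<mu> = sets borel" "sets \<nu> = sets borel"
    and proj: "\<And>t. distr \<mu> borel (\<lambda>x. t \<bullet> x) = distr \<nu> borel (\<lambda>x. t \<bullet> x)"
    and cont: "continuous_on UNIV f" and bound: "\<And>x. \<bar>f x\<bar> \<le> B"
  shows "(\<integral>x. f x \<partial>\<mu>) = (\<integral>x. f x \<partial>\<nu>)"
proof -
  have [measurable]: "f \<in> borel_measurable borel" by (rule borel_measurable_continuous_onI[OF cont])
  have lim: "(\<lambda>m. \<integral>x. gauss_smoothing (1 / Suc m) f x \<partial>\<mu>) \<longlonglongrightarrow> (\<integral>x. f x \<partial>\<mu>)"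
    if "prob_space \<mu>" and [measurable_cong]: "sets \<mu> = sets borel" for \<mu> :: "'a measure"
  proof (rule integral_dominated_convergence[where w="\<lambda>_. B"])
    interpret prob_space \<mu> by fact
    show "integrable \<mu> (\<lambda>_. B)" by simp
    show "AE x in \<mu>. (\<lambda>m. gauss_smoothing (1 / Suc m) f x) \<longlonglongrightarrow> f x"
      using gauss_smoothing_tendsto[OF cont bound] by simp
  qed (simp_all add: abs_gauss_smoothing_le[OF _ bound])
  have "(\<integral>x. gauss_smoothing \<sigma> f x \<partial>\<mu>) = (\<integral>x. gauss_smoothing \<sigma> f x \<partial>\<nu>)" if "0 < \<sigma>" for \<sigma>
    using integral_gauss_smoothing[OF that P(1) S(1) _ bound] integral_gauss_smoothing[OF that P(2) S(2) _ bound]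
      integral_std_gauss_density_eq_of_projections[OF P S proj] that
    by simp
  then have "(\<lambda>m. \<integral>x. gauss_smoothing (1 / Suc m) f x \<partial>\<mu>) = (\<lambda>m. \<integral>x. gauss_smoothing (1 / Suc m) f x \<partial>\<nu>)"
    by simp
  with lim[OF P(1) S(1)] lim[OF P(2) S(2)] show ?thesis
    by (metis LIMSEQ_unique)
qed

lemma tendsto_min_1_infdist:
  fixes C :: "'a::metric_space set"
  assumes "closed C" "C \<noteq> {}"
  shows "(\<lambda>m. min 1 (real m * infdist x C)) \<longlonglongrightarrow> indicator (- C) x"
proof (cases "x \<in> C")
  case True
  then have "infdist x C = 0" using assms in_closed_iff_infdist_zero by blast
  then show ?thesis using True by simp
next
  case False
  then have d: "infdist x C > 0" using assms infdist_pos_not_in_closed by blast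
  obtain N :: nat where N: "1 / infdist x C < N" using reals_Archimedean2 by blast
  have "eventually (\<lambda>m. min 1 (real m * infdist x C) = 1) sequentially"
    unfolding eventually_sequentially
  proof (intro exI allI impI)
    fix m assume "N \<le> m"
    then have "1 / infdist x C < m" using N by linarith
    then have "1 < m * infdist x C" using d by (simp add: field_simps)
    then show "min 1 (real m * infdist x C) = 1" by simp
  qed
  then have "(\<lambda>m. min 1 (real m * infdist x C)) \<longlonglongrightarrow> 1"
    by (rule tendsto_eventually)
  then show ?thesis using False by simp
qed

lemma tendsto_integral_min_1_infdist:
  fixes U :: "'a::euclidean_space set"
  assumes "prob_space M" and [measurable_cong]: "sets M = sets borel" and "open U" "U \<noteq> UNIV"
  shows "(\<lambda>m. \<integral>x. min 1 (real m * infdist x (- U)) \<partial>M) \<longlonglongrightarrow> measure M U"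
proof -
  interpret M: prob_space M by fact
  have [measurable]: "U \<in> sets borel" using \<open>open U\<close> by simp
  have "(\<lambda>m. \<integral>x. min 1 (real m * infdist x (- U)) \<partial>M) \<longlonglongrightarrow> (\<integral>x. indicator U x \<partial>M)"
  proof (rule integral_dominated_convergence[where w="\<lambda>_. 1"])
    have "(\<lambda>x. min 1 (real m * infdist x (- U))) \<in> borel_measurable borel" for m
      by (intro borel_measurable_continuous_onI continuous_intros)
    then show "(\<lambda>x. min 1 (real m * infdist x (- U))) \<in> borel_measurable M" for m
      by simp
    show "AE x in M. (\<lambda>m. min 1 (real m * infdist x (- U))) \<longlonglongrightarrow> indicator U x"
      using tendsto_min_1_infdist[of "- U"] assms(3,4) by auto
  qed (auto simp: infdist_nonneg)
  then show ?thesis by simp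
qed

text \<open>Open sets are approximated from inside by the bounded continuous functions
  \<open>min 1 (m * infdist x (- U))\<close>.\<close>
theorem cramer_wold:
  fixes \<mu> \<nu> :: "'a::euclidean_space measure"
  assumes P: "prob_space \<mu>" "prob_space \<nu>" and S: "sets \<mu> = sets borel" "sets \<nu> = sets borel"
    and proj: "\<And>t. distr \<mu> borel (\<lambda>x. t \<bullet> x) = distr \<nu> borel (\<lambda>x. t \<bullet> x)"
  shows "\<mu> = \<nu>"
proof -
  interpret \<mu>: prob_space \<mu> by fact
  interpret \<nu>: prob_space \<nu> by fact
  have space: "space \<mu> = UNIV" "space \<nu> = UNIV"
    using sets_eq_imp_space_eq[OF S(1)] sets_eq_imp_space_eq[OF S(2)] by auto
  have "emeasure \<mu> U = emeasure \<nu> U" if "open U" for U :: "'a set"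
  proof (cases "U = UNIV")
    case True
    then show ?thesis using \<mu>.emeasure_space_1 \<nu>.emeasure_space_1 space by simp
  next
    case False
    have "(\<integral>x. min 1 (real m * infdist x (- U)) \<partial>\<mu>) = (\<integral>x. min 1 (real m * infdist x (- U)) \<partial>\<nu>)" for m
      by (rule integral_bounded_continuous_eq_of_projections[OF P S proj, where B=1])
        (auto intro!: continuous_intros simp: infdist_nonneg)
    then have "measure \<mu> U = measure \<nu> U"
      using LIMSEQ_unique[OF tendsto_integral_min_1_infdist[OF P(1) S(1) that False]]
        tendsto_integral_min_1_infdist[OF P(2) S(2) that False]
      by simp
    then show ?thesis
      by (simp add: \<mu>.emeasure_eq_measure \<nu>.emeasure_eq_measure)
  qed
  then show ?thesis
  proof (intro measure_eqI_generator_eq[where E="{U. open U}" and \<Omega>=UNIV and A="\<lambda>_. UNIV"])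
    show "sets \<mu> = sigma_sets UNIV {U. open U}" "sets \<nu> = sigma_sets UNIV {U. open U}"
      by (simp_all add: S sets_borel)
  qed (auto simp: Int_stable_def \<mu>.emeasure_space_1 space)
qed

lemma gaussian_law_unique:
  assumes "gaussian_law \<mu> q" and "gaussian_law \<nu> q"
  shows "\<mu> = \<nu>"
  by (rule cramer_wold) (use assms in \<open>simp_all add: gaussian_law_def\<close>)

section \<open>Couplings and the quadratic transport cost\<close>

lemma coupling_distr_linear_gaussian:
  fixes S T :: "'a::euclidean_space \<Rightarrow> 'b::euclidean_space"
  assumes \<rho>: "gaussian_law \<rho> q" and "linear S" "linear T"
    and \<mu>: "gaussian_law \<mu> (\<lambda>a. q (adjoint S a))" and \<nu>: "gaussian_law \<nu> (\<lambda>a. q (adjoint T a))"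
  shows "distr \<rho> (borel \<Otimes>\<^sub>M borel) (\<lambda>z. (S z, T z)) \<in> couplings \<mu> \<nu>"
proof -
  from \<rho> have P: "prob_space \<rho>" and [measurable_cong]: "sets \<rho> = sets borel"
    by (auto simp: gaussian_law_def)
  have [measurable]: "S \<in> borel_measurable borel" "T \<in> borel_measurable borel"
    using \<open>linear S\<close> \<open>linear T\<close>
    by (auto intro!: borel_measurable_continuous_onI linear_continuous_on simp: linear_conv_bounded_linear)
  have "distr \<rho> borel S = \<mu>"
    by (rule gaussian_law_unique[OF gaussian_law_distr_linear[OF \<rho> \<open>linear S\<close>] \<mu>])
  moreover have "distr \<rho> borel T = \<nu>"
    by (rule gaussian_law_unique[OF gaussian_law_distr_linear[OF \<rho> \<open>linear T\<close>] \<nu>])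
  moreover have "distr (distr \<rho> (borel \<Otimes>\<^sub>M borel) (\<lambda>z. (S z, T z))) borel fst = distr \<rho> borel S"
    "distr (distr \<rho> (borel \<Otimes>\<^sub>M borel) (\<lambda>z. (S z, T z))) borel snd = distr \<rho> borel T"
    by (subst distr_distr; simp add: comp_def)+
  ultimately show ?thesis
    by (simp add: couplings_def prob_space.prob_space_distr[OF P])
qed

lemma has_bochner_integral_distr_comp:
  fixes g :: "'a::euclidean_space \<Rightarrow> real"
  assumes law: "distr \<pi> borel h = \<mu>" and h: "h \<in> \<pi> \<rightarrow>\<^sub>M borel" and "sets \<mu> = sets borel"
    and g: "has_bochner_integral \<mu> g r"
  shows "has_bochner_integral \<pi> (\<lambda>p. g (h p)) r"
proof -
  have [measurable]: "g \<in> borel_measurable borel"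
    using borel_measurable_has_bochner_integral[OF g]
    unfolding measurable_cong_sets[OF \<open>sets \<mu> = sets borel\<close> refl] .
  have "integrable \<pi> (\<lambda>p. g (h p))"
    using g integrable_distr_eq[OF h, of g] by (simp add: law has_bochner_integral_iff)
  moreover have "(\<integral>p. g (h p) \<partial>\<pi>) = (\<integral>z. g z \<partial>\<mu>)"
    using integral_distr[OF h, of g] by (simp add: law)
  ultimately show ?thesis using g by (simp add: has_bochner_integral_iff)
qed

lemma has_bochner_integral_coupling:
  fixes g :: "'a::euclidean_space \<Rightarrow> real"
  assumes \<pi>: "\<pi> \<in> couplings \<mu> \<nu>" and "sets \<mu> = sets borel" "sets \<nu> = sets borel"
  shows "has_bochner_integral \<mu> g r \<Longrightarrow> has_bochner_integral \<pi> (\<lambda>p. g (fst p)) r"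
    and "has_bochner_integral \<nu> g r \<Longrightarrow> has_bochner_integral \<pi> (\<lambda>p. g (snd p)) r"
proof -
  from \<pi> have [measurable_cong]: "sets \<pi> = sets (borel \<Otimes>\<^sub>M borel)"
    and "distr \<pi> borel fst = \<mu>" "distr \<pi> borel snd = \<nu>"
    by (auto simp: couplings_def)
  moreover have "fst \<in> \<pi> \<rightarrow>\<^sub>M borel" "snd \<in> \<pi> \<rightarrow>\<^sub>M borel" by measurable
  ultimately show "has_bochner_integral \<mu> g r \<Longrightarrow> has_bochner_integral \<pi> (\<lambda>p. g (fst p)) r"
    and "has_bochner_integral \<nu> g r \<Longrightarrow> has_bochner_integral \<pi> (\<lambda>p. g (snd p)) r"
    using assms(2,3) by (auto intro: has_bochner_integral_distr_comp)
qed

lemma integrable_coupling_cost: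
  fixes \<mu> \<nu> :: "'a::euclidean_space measure"
  assumes \<pi>: "\<pi> \<in> couplings \<mu> \<nu>" and S: "sets \<mu> = sets borel" "sets \<nu> = sets borel"
    and "integrable \<mu> (\<lambda>z. (norm z)\<^sup>2)" "integrable \<nu> (\<lambda>z. (norm z)\<^sup>2)"
  shows "integrable \<pi> (\<lambda>p. (norm (fst p - snd p))\<^sup>2)"
proof (rule Bochner_Integration.integrable_bound)
  from \<pi> have [measurable_cong]: "sets \<pi> = sets (borel \<Otimes>\<^sub>M borel)"
    by (simp add: couplings_def)
  show "(\<lambda>p. (norm (fst p - snd p))\<^sup>2) \<in> borel_measurable \<pi>"
    by measurable
  show "integrable \<pi> (\<lambda>p. 2 * (norm (fst p))\<^sup>2 + 2 * (norm (snd p))\<^sup>2)"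
    using has_bochner_integral_coupling[OF \<pi> S] assms(4,5)
    by (intro integrable.intros[OF has_bochner_integral_add] has_bochner_integral_mult_right)
      (auto simp: has_bochner_integral_iff)
  have "(norm (x - y))\<^sup>2 \<le> 2 * (norm x)\<^sup>2 + 2 * (norm y)\<^sup>2" for x y :: 'a
  proof -
    have "(norm (x - y))\<^sup>2 \<le> (norm x + norm y)\<^sup>2"
      by (rule power_mono[OF norm_triangle_ineq4]) simp
    also have "\<dots> \<le> 2 * (norm x)\<^sup>2 + 2 * (norm y)\<^sup>2"
      using zero_le_power2[of "norm x - norm y"] by (simp add: power2_eq_square algebra_simps)
    finally show ?thesis .
  qed
  then show "AE p in \<pi>. norm ((norm (fst p - snd p))\<^sup>2) \<le> norm (2 * (norm (fst p))\<^sup>2 + 2 * (norm (snd p))\<^sup>2)"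
    by (intro AE_I2) simp
qed

lemma nn_integral_cost_distr_pair:
  fixes S T :: "'a::euclidean_space \<Rightarrow> 'b::euclidean_space"
  assumes [measurable_cong]: "sets \<rho> = sets borel"
    and [measurable]: "S \<in> borel_measurable borel" "T \<in> borel_measurable borel"
    and cost: "has_bochner_integral \<rho> (\<lambda>z. (norm (S z - T z))\<^sup>2) C"
  shows "(\<integral>\<^sup>+ p. ennreal ((norm (fst p - snd p))\<^sup>2) \<partial>distr \<rho> (borel \<Otimes>\<^sub>M borel) (\<lambda>z. (S z, T z))) = ennreal C"
  using cost by (simp add: nn_integral_distr nn_integral_eq_integral has_bochner_integral_iff)

lemma norm_diff_power2_ge:
  fixes x y u :: "'a::real_inner"
  assumes u: "norm u = 1" and l: "0 < l" and k: "0 < k"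
  shows "(norm x)\<^sup>2 + (norm y)\<^sup>2 - (l * (u \<bullet> x)\<^sup>2 + (u \<bullet> y)\<^sup>2 / l)
           - (k * ((norm x)\<^sup>2 - (u \<bullet> x)\<^sup>2) + ((norm y)\<^sup>2 - (u \<bullet> y)\<^sup>2) / k) \<le> (norm (x - y))\<^sup>2"
proof -
  define p q where "p = u \<bullet> x" and "q = u \<bullet> y"
  define X Y where "X = x - p *\<^sub>R u" and "Y = y - q *\<^sub>R u"
  have uu: "u \<bullet> u = 1" using u by (simp add: power2_norm_eq_inner[symmetric])
  have nn: "norm z * norm z = z \<bullet> z" for z :: 'a
    by (simp add: power2_norm_eq_inner[symmetric] power2_eq_square)
  have xy: "x \<bullet> y = X \<bullet> Y + p * q"
    by (simp add: X_def Y_def inner_diff_left inner_diff_right uu p_def q_def inner_commute algebra_simps)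
  have X: "X \<bullet> X = (norm x)\<^sup>2 - p\<^sup>2" and Y: "Y \<bullet> Y = (norm y)\<^sup>2 - q\<^sup>2"
    by (simp_all add: X_def Y_def inner_diff_left inner_diff_right uu p_def q_def inner_commute nn
        power2_eq_square algebra_simps)
  have "(norm (x - y))\<^sup>2 = (norm x)\<^sup>2 + (norm y)\<^sup>2 - 2 * (x \<bullet> y)"
    by (simp add: power2_norm_eq_inner inner_diff_left inner_diff_right inner_commute)
  moreover have "2 * (p * q) \<le> l * p\<^sup>2 + q\<^sup>2 / l"
  proof -
    have "0 \<le> (l * p - q)\<^sup>2" by simp
    then show ?thesis using l by (simp add: field_simps power2_eq_square algebra_simps)
  qed
  moreover have "2 * (X \<bullet> Y) \<le> k * (X \<bullet> X) + (Y \<bullet> Y) / k"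
  proof -
    have "0 \<le> (k *\<^sub>R X - Y) \<bullet> (k *\<^sub>R X - Y)" by simp
    then show ?thesis using k
      by (simp add: inner_diff_left inner_diff_right inner_commute field_simps algebra_simps)
  qed
  ultimately show ?thesis
    unfolding xy X Y p_def[symmetric] q_def[symmetric] by (simp add: algebra_simps)
qed

text \<open>The infimum of \<open>l * a + b / l\<close> over \<open>l > 0\<close> is \<open>2 * sqrt (a * b)\<close>, also when \<open>a\<close> or \<open>b\<close>
  vanishes and the infimum is not attained.\<close>
lemma le_two_sqrt_mult:
  fixes a b c :: real
  assumes "0 \<le> a" "0 \<le> b" and le: "\<And>l. 0 < l \<Longrightarrow> c \<le> l * a + b / l"
  shows "c \<le> 2 * sqrt (a * b)"
proof (cases "a = 0 \<or> b = 0")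
  case True
  show ?thesis
  proof (rule ccontr)
    assume "\<not> ?thesis"
    with True have c: "0 < c" by auto
    have frac: "d / (2 * (d + 1)) < 1" if "0 \<le> d" for d :: real
      using that by simp
    consider "a = 0" | "b = 0" using True by blast
    then show False
    proof cases
      case 1
      define l where "l = 2 * (b + 1) / c"
      have "b / l = c * (b / (2 * (b + 1)))" using c by (simp add: l_def field_simps)
      also have "\<dots> < c" using mult_strict_left_mono[OF frac[OF \<open>0 \<le> b\<close>] c] by simp
      finally show False using le[of l] c \<open>0 \<le> b\<close> 1 by (simp add: l_def)
    next
      case 2
      define l where "l = c / (2 * (a + 1))"
      have "l * a = c * (a / (2 * (a + 1)))" by (simp add: l_def)
      also have "\<dots> < c" using mult_strict_left_mono[OF frac[OF \<open>0 \<le> a\<close>] c] by simp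
      finally show False using le[of l] c \<open>0 \<le> a\<close> 2 by (simp add: l_def)
    qed
  qed
next
  case False
  with assms have "0 < a" "0 < b" by auto
  then have "sqrt (b / a) * a + b / sqrt (b / a) = 2 * sqrt (a * b)"
    by (simp add: real_sqrt_divide field_simps real_sqrt_mult)
  with le[of "sqrt (b / a)"] \<open>0 < a\<close> \<open>0 < b\<close> show ?thesis by simp
qed

lemma has_bochner_integral_mono:
  fixes f g :: "'a \<Rightarrow> real"
  assumes "has_bochner_integral M f a" "has_bochner_integral M g b" "\<And>x. f x \<le> g x"
  shows "a \<le> b"
  using assms integral_mono[of M f g] by (auto simp: has_bochner_integral_iff)

text \<open>Split \<open>x\<close> and \<open>y\<close> into their components along \<open>u\<close> and orthogonal to \<open>u\<close>, bound the two
  cross terms of \<open>2 x \<bullet> y\<close> by AM-GM with free weights \<open>l\<close> and \<open>k\<close>, integrate, and optimize the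
  weights.\<close>
lemma coupling_cost_ge:
  fixes \<mu> \<nu> :: "'a::euclidean_space measure"
  assumes \<pi>: "\<pi> \<in> couplings \<mu> \<nu>" and S: "sets \<mu> = sets borel" "sets \<nu> = sets borel"
    and u: "norm u = 1"
    and m\<mu>: "has_bochner_integral \<mu> (\<lambda>z. (norm z)\<^sup>2) m\<^sub>\<mu>" and p\<mu>: "has_bochner_integral \<mu> (\<lambda>z. (u \<bullet> z)\<^sup>2) p\<^sub>\<mu>"
    and m\<nu>: "has_bochner_integral \<nu> (\<lambda>z. (norm z)\<^sup>2) m\<^sub>\<nu>" and p\<nu>: "has_bochner_integral \<nu> (\<lambda>z. (u \<bullet> z)\<^sup>2) p\<^sub>\<nu>"
  shows "ennreal (m\<^sub>\<mu> + m\<^sub>\<nu> - 2 * sqrt (p\<^sub>\<mu> * p\<^sub>\<nu>) - 2 * sqrt ((m\<^sub>\<mu> - p\<^sub>\<mu>) * (m\<^sub>\<nu> - p\<^sub>\<nu>)))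
    \<le> (\<integral>\<^sup>+ p. ennreal ((norm (fst p - snd p))\<^sup>2) \<partial>\<pi>)"
proof -
  note lift = has_bochner_integral_coupling[OF \<pi> S]
  have proj_le: "(u \<bullet> z)\<^sup>2 \<le> (norm z)\<^sup>2" for z :: 'a
    using Cauchy_Schwarz_ineq[of u z] u by (simp add: power2_norm_eq_inner norm_eq_1)
  have "0 \<le> p\<^sub>\<mu>" "p\<^sub>\<mu> \<le> m\<^sub>\<mu>" "0 \<le> p\<^sub>\<nu>" "p\<^sub>\<nu> \<le> m\<^sub>\<nu>"
    using has_bochner_integral_mono[OF has_bochner_integral_zero p\<mu>]
      has_bochner_integral_mono[OF p\<mu> m\<mu> proj_le]
      has_bochner_integral_mono[OF has_bochner_integral_zero p\<nu>]
      has_bochner_integral_mono[OF p\<nu> m\<nu> proj_le]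
    by simp_all
  define E where "E = (\<integral>p. (norm (fst p - snd p))\<^sup>2 \<partial>\<pi>)"
  have integrable: "integrable \<pi> (\<lambda>p. (norm (fst p - snd p))\<^sup>2)"
    using integrable_coupling_cost[OF \<pi> S] m\<mu> m\<nu> by (simp add: has_bochner_integral_iff)
  then have cost: "(\<integral>\<^sup>+ p. ennreal ((norm (fst p - snd p))\<^sup>2) \<partial>\<pi>) = ennreal E"
    unfolding E_def by (rule nn_integral_eq_integral) simp
  have bound: "m\<^sub>\<mu> + m\<^sub>\<nu> - (l * p\<^sub>\<mu> + p\<^sub>\<nu> / l) - (k * (m\<^sub>\<mu> - p\<^sub>\<mu>) + (m\<^sub>\<nu> - p\<^sub>\<nu>) / k) \<le> E"
    if "0 < l" "0 < k" for l k
  proof -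
    have "has_bochner_integral \<pi> (\<lambda>p. (norm (fst p))\<^sup>2 + (norm (snd p))\<^sup>2
        - (l * (u \<bullet> fst p)\<^sup>2 + (u \<bullet> snd p)\<^sup>2 / l)
        - (k * ((norm (fst p))\<^sup>2 - (u \<bullet> fst p)\<^sup>2) + ((norm (snd p))\<^sup>2 - (u \<bullet> snd p)\<^sup>2) / k))
      (m\<^sub>\<mu> + m\<^sub>\<nu> - (l * p\<^sub>\<mu> + p\<^sub>\<nu> / l) - (k * (m\<^sub>\<mu> - p\<^sub>\<mu>) + (m\<^sub>\<nu> - p\<^sub>\<nu>) / k))"
      by (intro has_bochner_integral_diff has_bochner_integral_add has_bochner_integral_mult_right
          has_bochner_integral_divide_zero lift m\<mu> p\<mu> m\<nu> p\<nu>)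
    then show ?thesis
      unfolding E_def
      by (rule has_bochner_integral_mono[OF _ has_bochner_integral_integrable[OF integrable]])
        (rule norm_diff_power2_ge[OF u that])
  qed
  have "m\<^sub>\<mu> + m\<^sub>\<nu> - 2 * sqrt (p\<^sub>\<mu> * p\<^sub>\<nu>) - E \<le> 2 * sqrt ((m\<^sub>\<mu> - p\<^sub>\<mu>) * (m\<^sub>\<nu> - p\<^sub>\<nu>))"
  proof (rule le_two_sqrt_mult)
    fix k :: real assume "0 < k"
    have "m\<^sub>\<mu> + m\<^sub>\<nu> - (k * (m\<^sub>\<mu> - p\<^sub>\<mu>) + (m\<^sub>\<nu> - p\<^sub>\<nu>) / k) - E \<le> 2 * sqrt (p\<^sub>\<mu> * p\<^sub>\<nu>)"
      using bound[OF _ \<open>0 < k\<close>] \<open>0 \<le> p\<^sub>\<mu>\<close> \<open>0 \<le> p\<^sub>\<nu>\<close> by (intro le_two_sqrt_mult) force+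
    then show "m\<^sub>\<mu> + m\<^sub>\<nu> - 2 * sqrt (p\<^sub>\<mu> * p\<^sub>\<nu>) - E \<le> k * (m\<^sub>\<mu> - p\<^sub>\<mu>) + (m\<^sub>\<nu> - p\<^sub>\<nu>) / k"
      by simp
  qed (use \<open>p\<^sub>\<mu> \<le> m\<^sub>\<mu>\<close> \<open>p\<^sub>\<nu> \<le> m\<^sub>\<nu>\<close> in simp_all)
  then show ?thesis
    unfolding cost by (intro ennreal_leI) simp
qed

lemma W2_sq_eqI:
  assumes "\<And>\<pi>. \<pi> \<in> couplings \<mu> \<nu> \<Longrightarrow> c \<le> (\<integral>\<^sup>+ p. ennreal ((norm (fst p - snd p))\<^sup>2) \<partial>\<pi>)"
    and "\<pi> \<in> couplings \<mu> \<nu>" and "(\<integral>\<^sup>+ p. ennreal ((norm (fst p - snd p))\<^sup>2) \<partial>\<pi>) = c"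
  shows "W2_sq \<mu> \<nu> = c"
  unfolding W2_sq_def using assms by (intro antisym INF_greatest INF_lower2) auto

section \<open>Transport between a spiked and an isotropic Gaussian law\<close>

lemma sum_Basis_inner_power2: "(\<Sum>b\<in>Basis. (u \<bullet> b)\<^sup>2) = (norm u)\<^sup>2"
  unfolding power2_norm_eq_inner by (subst (2) euclidean_inner) (simp add: power2_eq_square)

text \<open>The map \<open>T\<close> scales by \<open>\<beta> / \<alpha>\<close> and shrinks the direction \<open>u\<close> by the factor \<open>1 / sqrt 2\<close>;
  it pushes the covariance \<open>\<alpha>\<^sup>2 (I + u u\<^sup>T)\<close> forward to \<open>\<beta>\<^sup>2 I\<close>.\<close>
lemma spiked_gaussian_transport:
  fixes \<mu> \<nu> :: "'a::euclidean_space measure"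
  assumes \<mu>: "gaussian_law \<mu> (\<lambda>a. \<alpha>\<^sup>2 * ((norm a)\<^sup>2 + (u \<bullet> a)\<^sup>2))" and \<nu>: "gaussian_law \<nu> (\<lambda>a. \<beta>\<^sup>2 * (norm a)\<^sup>2)"
    and u: "norm u = 1" and "0 < \<alpha>"
  shows "\<exists>\<pi>\<in>couplings \<mu> \<nu>. (\<integral>\<^sup>+ p. ennreal ((norm (fst p - snd p))\<^sup>2) \<partial>\<pi>) =
    ennreal ((sqrt 2 * \<alpha> - \<beta>)\<^sup>2 + (real DIM('a) - 1) * (\<alpha> - \<beta>)\<^sup>2)"
proof -
  define q where "q a = \<alpha>\<^sup>2 * ((norm a)\<^sup>2 + (u \<bullet> a)\<^sup>2)" for a :: 'a
  define h :: real where "h = sqrt 2 / 2"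
  define r c where "r = \<beta> / \<alpha>" and "c = 1 - h"
  define T where "T z = r *\<^sub>R (z - (c * (u \<bullet> z)) *\<^sub>R u)" for z :: 'a
  have h: "2 * h * h = 1" by (simp add: h_def flip: power2_eq_square)
  have \<beta>: "\<beta> = r * \<alpha>" using \<open>0 < \<alpha>\<close> by (simp add: r_def)
  have uu: "u \<bullet> u = 1" using u by (simp add: power2_norm_eq_inner[symmetric])
  have "linear T"
    by (auto simp: linear_iff T_def inner_add_right algebra_simps)
  have adjoint_id: "adjoint (\<lambda>z::'a. z) = (\<lambda>z. z)" by (rule adjoint_unique) simp
  have adjoint_T: "adjoint T = T"
    by (rule adjoint_unique) (simp add: T_def inner_diff_left inner_diff_right inner_commute algebra_simps)
  have "q (T a) = \<beta>\<^sup>2 * (norm a)\<^sup>2" for a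
  proof -
    have "(norm (T a))\<^sup>2 + (u \<bullet> T a)\<^sup>2 = r * r * ((norm a)\<^sup>2 - (2 * c - c * c - h * h) * (u \<bullet> a)\<^sup>2)"
      unfolding power2_norm_eq_inner T_def
      by (simp add: inner_diff_left inner_diff_right uu inner_commute c_def power2_eq_square algebra_simps)
    also have "\<dots> = r * r * (norm a)\<^sup>2" using h by (simp add: c_def algebra_simps)
    finally show ?thesis by (simp add: q_def \<beta> power2_eq_square)
  qed
  then have "distr \<mu> (borel \<Otimes>\<^sub>M borel) (\<lambda>z. (z, T z)) \<in> couplings \<mu> \<nu>"
    using coupling_distr_linear_gaussian[OF \<mu>[folded q_def] linear_ident \<open>linear T\<close>] \<mu> \<nu>
    by (simp add: adjoint_id adjoint_T q_def)
  moreover have "(\<integral>\<^sup>+ p. ennreal ((norm (fst p - snd p))\<^sup>2) \<partial>distr \<mu> (borel \<Otimes>\<^sub>M borel) (\<lambda>z. (z, T z))) =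
    ennreal ((sqrt 2 * \<alpha> - \<beta>)\<^sup>2 + (real DIM('a) - 1) * (\<alpha> - \<beta>)\<^sup>2)"
  proof -
    define K where "K = 2 * (1 - r) * r * c + r * r * (c * c)"
    have sets: "sets \<mu> = sets borel" using \<mu> by (simp add: gaussian_law_def)
    have T_measurable: "T \<in> borel_measurable borel"
      using \<open>linear T\<close> by (auto intro!: borel_measurable_continuous_onI linear_continuous_on
          simp: linear_conv_bounded_linear)
    have cost: "(norm (z - T z))\<^sup>2 = (1 - r) * (1 - r) * (norm z)\<^sup>2 + K * (u \<bullet> z)\<^sup>2" for z
    proof -
      have diff: "z - T z = (1 - r) *\<^sub>R z + (r * c * (u \<bullet> z)) *\<^sub>R u"
        by (simp add: T_def algebra_simps)
      show ?thesis
        unfolding diff power2_norm_eq_inner K_def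
        by (simp add: inner_add_left inner_add_right uu inner_commute power2_eq_square algebra_simps)
    qed
    have "has_bochner_integral \<mu> (\<lambda>z. (norm (z - T z))\<^sup>2)
        ((1 - r) * (1 - r) * ((real DIM('a) + 1) * \<alpha>\<^sup>2) + K * (2 * \<alpha>\<^sup>2))"
      unfolding cost
      using has_bochner_integral_gaussian_law_norm[OF \<mu>] has_bochner_integral_gaussian_law_inner[OF \<mu>, of u]
      by (intro has_bochner_integral_add has_bochner_integral_mult_right)
        (simp_all add: sum.distrib sum_distrib_left[symmetric] sum_Basis_inner_power2 u uu algebra_simps)
    moreover have "(1 - r) * (1 - r) * ((real DIM('a) + 1) * \<alpha>\<^sup>2) + K * (2 * \<alpha>\<^sup>2) =
        (sqrt 2 * \<alpha> - \<beta>)\<^sup>2 + (real DIM('a) - 1) * (\<alpha> - \<beta>)\<^sup>2"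
    proof -
      have "sqrt 2 = 2 * h" by (simp add: h_def)
      then show ?thesis
        unfolding K_def c_def \<beta> power2_eq_square using h by algebra
    qed
    ultimately show ?thesis
      using nn_integral_cost_distr_pair[OF sets _ T_measurable] by simp
  qed
  ultimately show ?thesis by blast
qed

lemma degenerate_gaussian_transport:
  fixes \<mu> \<nu> :: "'a::euclidean_space measure"
  assumes \<mu>: "gaussian_law \<mu> (\<lambda>_. 0)" and \<nu>: "gaussian_law \<nu> (\<lambda>a. \<beta>\<^sup>2 * (norm a)\<^sup>2)"
  shows "\<exists>\<pi>\<in>couplings \<mu> \<nu>. (\<integral>\<^sup>+ p. ennreal ((norm (fst p - snd p))\<^sup>2) \<partial>\<pi>) = ennreal (real DIM('a) * \<beta>\<^sup>2)"
proof -
  have adjoint_zero: "adjoint (\<lambda>z::'a. 0) = (\<lambda>z. 0)" and adjoint_id: "adjoint (\<lambda>z::'a. z) = (\<lambda>z. z)"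
    by (rule adjoint_unique; simp)+
  have "gaussian_law \<mu> (\<lambda>a. \<beta>\<^sup>2 * (norm (adjoint (\<lambda>z::'a. 0) a))\<^sup>2)"
    and "gaussian_law \<nu> (\<lambda>a. \<beta>\<^sup>2 * (norm (adjoint (\<lambda>z::'a. z) a))\<^sup>2)"
    unfolding adjoint_zero adjoint_id using \<mu> \<nu> by simp_all
  then have "distr \<nu> (borel \<Otimes>\<^sub>M borel) (\<lambda>z. (0, z)) \<in> couplings \<mu> \<nu>"
    by (rule coupling_distr_linear_gaussian[OF \<nu> linear_zero linear_ident])
  moreover have "(\<integral>\<^sup>+ p. ennreal ((norm (fst p - snd p))\<^sup>2) \<partial>distr \<nu> (borel \<Otimes>\<^sub>M borel) (\<lambda>z. (0, z))) =
      ennreal (real DIM('a) * \<beta>\<^sup>2)"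
    using has_bochner_integral_gaussian_law_norm[OF \<nu>] \<nu>
    by (intro nn_integral_cost_distr_pair) (simp_all add: gaussian_law_def)
  ultimately show ?thesis by blast
qed

theorem W2_sq_spiked_isotropic_gaussian:
  fixes \<mu> \<nu> :: "'a::euclidean_space measure"
  assumes \<mu>: "gaussian_law \<mu> (\<lambda>a. \<alpha>\<^sup>2 * ((norm a)\<^sup>2 + (u \<bullet> a)\<^sup>2))" and \<nu>: "gaussian_law \<nu> (\<lambda>a. \<beta>\<^sup>2 * (norm a)\<^sup>2)"
    and u: "norm u = 1" and "0 \<le> \<alpha>" "0 \<le> \<beta>"
  shows "W2_sq \<mu> \<nu> = ennreal ((sqrt 2 * \<alpha> - \<beta>)\<^sup>2 + (real DIM('a) - 1) * (\<alpha> - \<beta>)\<^sup>2)"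
proof -
  define n where "n = real DIM('a)"
  have "1 \<le> n" by (simp add: n_def DIM_positive)
  have moments:
    "has_bochner_integral \<mu> (\<lambda>z. (norm z)\<^sup>2) ((n + 1) * \<alpha>\<^sup>2)" "has_bochner_integral \<mu> (\<lambda>z. (u \<bullet> z)\<^sup>2) (2 * \<alpha>\<^sup>2)"
    "has_bochner_integral \<nu> (\<lambda>z. (norm z)\<^sup>2) (n * \<beta>\<^sup>2)" "has_bochner_integral \<nu> (\<lambda>z. (u \<bullet> z)\<^sup>2) (\<beta>\<^sup>2)"
    using has_bochner_integral_gaussian_law_norm[OF \<mu>] has_bochner_integral_gaussian_law_inner[OF \<mu>, of u]
      has_bochner_integral_gaussian_law_norm[OF \<nu>] has_bochner_integral_gaussian_law_inner[OF \<nu>, of u]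
      u u[unfolded norm_eq_1]
    by (simp_all add: n_def sum.distrib sum_distrib_left[symmetric] sum_Basis_inner_power2 algebra_simps)
  have "sqrt (2 * \<alpha>\<^sup>2 * \<beta>\<^sup>2) = sqrt 2 * \<alpha> * \<beta>"
    using \<open>0 \<le> \<alpha>\<close> \<open>0 \<le> \<beta>\<close> by (simp add: real_sqrt_mult)
  moreover have "sqrt (((n + 1) * \<alpha>\<^sup>2 - 2 * \<alpha>\<^sup>2) * (n * \<beta>\<^sup>2 - \<beta>\<^sup>2)) = (n - 1) * \<alpha> * \<beta>"
  proof -
    have "((n + 1) * \<alpha>\<^sup>2 - 2 * \<alpha>\<^sup>2) * (n * \<beta>\<^sup>2 - \<beta>\<^sup>2) = ((n - 1) * \<alpha> * \<beta>)\<^sup>2"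
      by (simp add: power2_eq_square algebra_simps)
    then show ?thesis using \<open>1 \<le> n\<close> \<open>0 \<le> \<alpha>\<close> \<open>0 \<le> \<beta>\<close> by simp
  qed
  ultimately have "(n + 1) * \<alpha>\<^sup>2 + n * \<beta>\<^sup>2 - 2 * sqrt (2 * \<alpha>\<^sup>2 * \<beta>\<^sup>2)
      - 2 * sqrt (((n + 1) * \<alpha>\<^sup>2 - 2 * \<alpha>\<^sup>2) * (n * \<beta>\<^sup>2 - \<beta>\<^sup>2))
      = (sqrt 2 * \<alpha> - \<beta>)\<^sup>2 + (n - 1) * (\<alpha> - \<beta>)\<^sup>2"
    by (simp add: power2_eq_square algebra_simps)
  then have lower: "ennreal ((sqrt 2 * \<alpha> - \<beta>)\<^sup>2 + (n - 1) * (\<alpha> - \<beta>)\<^sup>2)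
      \<le> (\<integral>\<^sup>+ p. ennreal ((norm (fst p - snd p))\<^sup>2) \<partial>\<pi>)" if "\<pi> \<in> couplings \<mu> \<nu>" for \<pi>
    using coupling_cost_ge[OF that _ _ u moments] \<mu> \<nu> by (simp add: gaussian_law_def)
  show ?thesis
  proof (cases "\<alpha> = 0")
    case True
    then obtain \<pi> where "\<pi> \<in> couplings \<mu> \<nu>"
      "(\<integral>\<^sup>+ p. ennreal ((norm (fst p - snd p))\<^sup>2) \<partial>\<pi>) = ennreal (n * \<beta>\<^sup>2)"
      using degenerate_gaussian_transport[of \<mu> \<nu> \<beta>] \<mu> \<nu> by (auto simp: n_def)
    with lower True show ?thesis
      by (intro W2_sq_eqI) (auto simp: n_def power2_eq_square algebra_simps)
  next
    case False
    then obtain \<pi> where "\<pi> \<in> couplings \<mu> \<nu>" "(\<integral>\<^sup>+ p. ennreal ((norm (fst p - snd p))\<^sup>2) \<partial>\<pi>) =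
        ennreal ((sqrt 2 * \<alpha> - \<beta>)\<^sup>2 + (n - 1) * (\<alpha> - \<beta>)\<^sup>2)"
      using spiked_gaussian_transport[OF \<mu> \<nu> u] \<open>0 \<le> \<alpha>\<close> by (auto simp: n_def)
    with lower show ?thesis
      by (intro W2_sq_eqI) (auto simp: n_def)
  qed
qed

lemma W2_sq_rank_one_isotropic_gaussian:
  fixes \<mu> \<nu> :: "'a::euclidean_space measure"
  assumes \<mu>: "gaussian_law \<mu> (\<lambda>a. ((norm a)\<^sup>2 * (norm v)\<^sup>2 + (a \<bullet> v)\<^sup>2) / n)"
    and \<nu>: "gaussian_law \<nu> (\<lambda>a. \<beta>\<^sup>2 * (norm a)\<^sup>2)" and "0 < n" "0 \<le> \<beta>"
  shows "W2_sq \<mu> \<nu> = ennreal ((sqrt 2 * (norm v / sqrt n) - \<beta>)\<^sup>2 + (real DIM('a) - 1) * (norm v / sqrt n - \<beta>)\<^sup>2)"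
proof -
  define u where "u = (if v = 0 then (SOME b. b \<in> Basis) else v /\<^sub>R norm v)"
  have u: "norm u = 1" and v: "v = norm v *\<^sub>R u"
    by (auto simp: u_def SOME_Basis)
  have "((norm a)\<^sup>2 * (norm v)\<^sup>2 + (a \<bullet> v)\<^sup>2) / n = (norm v / sqrt n)\<^sup>2 * ((norm a)\<^sup>2 + (u \<bullet> a)\<^sup>2)" for a
    using \<open>0 < n\<close> u by (subst (1 2) v) (simp add: power2_eq_square field_simps inner_commute)
  with \<mu> have "gaussian_law \<mu> (\<lambda>a. (norm v / sqrt n)\<^sup>2 * ((norm a)\<^sup>2 + (u \<bullet> a)\<^sup>2))"
    by simp
  from W2_sq_spiked_isotropic_gaussian[OF this \<nu> u] \<open>0 < n\<close> \<open>0 \<le> \<beta>\<close> show ?thesis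
    by simp
qed

section \<open>Laws of the two recursions\<close>

lemma sum_square_eq_sum_lower_triangle:
  fixes X :: "'n::{finite,linorder} \<Rightarrow> 'n \<Rightarrow> real"
  shows "(\<Sum>i\<in>UNIV. \<Sum>j\<in>UNIV. X i j) =
    (\<Sum>p\<in>{(i,j). j \<le> i}. if fst p = snd p then X (fst p) (fst p) else X (fst p) (snd p) + X (snd p) (fst p))"
proof -
  define L where "L = {(i::'n,j). j \<le> i}"
  define U where "U = {(i::'n,j). i < j}"
  have "(\<Sum>i\<in>UNIV. \<Sum>j\<in>UNIV. X i j) = (\<Sum>p\<in>L. X (fst p) (snd p)) + (\<Sum>p\<in>U. X (fst p) (snd p))"
    by (subst sum.union_disjoint[symmetric])
      (auto simp: L_def U_def sum.cartesian_product split_beta intro!: sum.cong)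
  also have "(\<Sum>p\<in>U. X (fst p) (snd p)) = (\<Sum>p\<in>{p\<in>L. fst p \<noteq> snd p}. X (snd p) (fst p))"
    by (rule sum.reindex_bij_witness[where i="\<lambda>(a,b). (b,a)" and j="\<lambda>(a,b). (b,a)"])
      (auto simp: L_def U_def)
  also have "\<dots> = (\<Sum>p\<in>L. if fst p = snd p then 0 else X (snd p) (fst p))"
    by (subst sum.inter_filter) (auto intro!: sum.cong)
  finally show ?thesis
    by (simp add: L_def[symmetric] sum.distrib[symmetric] if_distrib[of "\<lambda>x. _ + x"] cong: if_cong)
qed

text \<open>The bilinear form \<open>a \<bullet> A v\<close> of a GOE matrix is a weighted sum of the independent entries
  on and below the diagonal: an off-diagonal entry enters with weight \<open>a\<^sub>i v\<^sub>j + a\<^sub>j v\<^sub>i\<close>.\<close>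
lemma normal_rv_GOE_bilinear:
  fixes A :: "'w \<Rightarrow> ((real, 'n::{finite,linorder}) vec, 'n) vec"
  assumes P: "prob_space M" and G: "is_GOE M A"
  shows "normal_rv M (\<lambda>\<omega>. a \<bullet> (A \<omega> *v v)) 0 (((norm a)\<^sup>2 * (norm v)\<^sup>2 + (a \<bullet> v)\<^sup>2) / real CARD('n))"
proof -
  define n where "n = real CARD('n)"
  define L where "L = {(i::'n,j). j \<le> i}"
  define coef where "coef p = (if fst p = snd p then a $ fst p * v $ fst p
    else a $ fst p * v $ snd p + a $ snd p * v $ fst p)" for p :: "'n \<times> 'n"
  define \<sigma> where "\<sigma> p = (if fst p = snd p then sqrt (2 / n) else sqrt (1 / n))" for p :: "'n \<times> 'n"
  define X where "X = (\<lambda>(i,j) \<omega>. A \<omega> $ i $ j)"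
  from G have sym: "\<And>\<omega> i j. \<omega> \<in> space M \<Longrightarrow> A \<omega> $ i $ j = A \<omega> $ j $ i"
    and ind: "prob_space.indep_vars M (\<lambda>_. borel) X L"
    and diag: "\<And>i. distributed M lborel (\<lambda>\<omega>. A \<omega> $ i $ i) (normal_density 0 (sqrt (2 / n)))"
    and off: "\<And>i j. j < i \<Longrightarrow> distributed M lborel (\<lambda>\<omega>. A \<omega> $ i $ j) (normal_density 0 (sqrt (1 / n)))"
    by (auto simp: is_GOE_def X_def L_def n_def)
  have "normal_rv M (\<lambda>\<omega>. \<Sum>p\<in>L. coef p * X p \<omega>) 0 (\<Sum>p\<in>L. (coef p)\<^sup>2 * (\<sigma> p)\<^sup>2)"
  proof (rule normal_rv_sum_indep[OF P _ ind])
    show "distributed M lborel (X p) (normal_density 0 (\<sigma> p))" if "p \<in> L" for p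
      using that diag off by (cases p) (auto simp: X_def \<sigma>_def L_def order.order_iff_strict)
  qed (simp_all add: \<sigma>_def n_def)
  moreover have "a \<bullet> (A \<omega> *v v) = (\<Sum>p\<in>L. coef p * X p \<omega>)" if "\<omega> \<in> space M" for \<omega>
  proof -
    have "a \<bullet> (A \<omega> *v v) = (\<Sum>i\<in>UNIV. \<Sum>j\<in>UNIV. a $ i * A \<omega> $ i $ j * v $ j)"
      by (simp add: inner_vec_def matrix_vector_mult_def sum_distrib_left mult.assoc)
    also have "\<dots> = (\<Sum>p\<in>L. coef p * X p \<omega>)"
      unfolding sum_square_eq_sum_lower_triangle L_def[symmetric]
      by (rule sum.cong) (auto simp: coef_def X_def sym[OF that, of "snd _" "fst _"] algebra_simps)
    finally show ?thesis .
  qed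
  moreover have "(\<Sum>p\<in>L. (coef p)\<^sup>2 * (\<sigma> p)\<^sup>2) = ((norm a)\<^sup>2 * (norm v)\<^sup>2 + (a \<bullet> v)\<^sup>2) / n"
  proof -
    have norm_sq: "(norm x)\<^sup>2 = (\<Sum>i\<in>UNIV. (x $ i)\<^sup>2)" for x :: "(real, 'n) vec"
      unfolding power2_norm_eq_inner inner_vec_def by (simp add: power2_eq_square)
    have "(\<Sum>p\<in>L. (coef p)\<^sup>2 * (\<sigma> p)\<^sup>2) =
        (\<Sum>i\<in>UNIV. \<Sum>j\<in>UNIV. a $ i * v $ j * (a $ i * v $ j + a $ j * v $ i) / n)"
      unfolding sum_square_eq_sum_lower_triangle L_def[symmetric]
      by (intro sum.cong) (auto simp: coef_def \<sigma>_def n_def power2_eq_square field_simps)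
    also have "\<dots> = ((\<Sum>i\<in>UNIV. \<Sum>j\<in>UNIV. (a $ i)\<^sup>2 * (v $ j)\<^sup>2)
        + (\<Sum>i\<in>UNIV. \<Sum>j\<in>UNIV. (a $ i * v $ i) * (a $ j * v $ j))) / n"
      by (simp add: sum_divide_distrib[symmetric] sum.distrib[symmetric] power2_eq_square algebra_simps)
    also have "(\<Sum>i\<in>UNIV. \<Sum>j\<in>UNIV. (a $ i)\<^sup>2 * (v $ j)\<^sup>2) = (norm a)\<^sup>2 * (norm v)\<^sup>2"
      by (simp add: norm_sq sum_product)
    also have "(\<Sum>i\<in>UNIV. \<Sum>j\<in>UNIV. (a $ i * v $ i) * (a $ j * v $ j)) = (a \<bullet> v)\<^sup>2"
      by (simp add: inner_vec_def sum_product power2_eq_square)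
    finally show ?thesis .
  qed
  ultimately show ?thesis
    by (auto simp: n_def intro: normal_rv_cong)
qed

lemma gaussian_law_GOE_mult_vec:
  fixes A :: "'w \<Rightarrow> ((real, 'n::{finite,linorder}) vec, 'n) vec"
  assumes "prob_space M" and "is_GOE M A"
  shows "gaussian_law (distr M borel (\<lambda>\<omega>. A \<omega> *v v))
    (\<lambda>a. ((norm a)\<^sup>2 * (norm v)\<^sup>2 + (a \<bullet> v)\<^sup>2) / real CARD('n))"
proof (rule gaussian_law_distrI[OF assms(1) _ normal_rv_GOE_bilinear[OF assms]])
  have [measurable]: "A \<in> borel_measurable M" using assms(2) by (simp add: is_GOE_def)
  have "linear (\<lambda>B :: ((real, 'n) vec, 'n) vec. B *v v)"
    by (rule linearI) (simp_all add: matrix_vector_mult_def vec_eq_iff sum.distrib algebra_simps sum_distrib_left)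
  then have "(\<lambda>B :: ((real, 'n) vec, 'n) vec. B *v v) \<in> borel_measurable borel"
    by (auto intro!: borel_measurable_continuous_onI linear_continuous_on simp: linear_conv_bounded_linear)
  then show "(\<lambda>\<omega>. A \<omega> *v v) \<in> borel_measurable M"
    by measurable
qed

lemma gaussian_law_gaussian_process_sum:
  fixes w :: "'t::finite \<Rightarrow> 'w \<Rightarrow> (real, 'n::finite) vec"
  assumes "prob_space M" and w: "gaussian_process_cov M w \<Sigma>"
  shows "gaussian_law (distr M borel (\<lambda>\<omega>. \<Sum>s\<in>UNIV. c s *\<^sub>R w s \<omega>))
    (\<lambda>a. (\<Sum>s\<in>UNIV. \<Sum>s'\<in>UNIV. c s * c s' * \<Sigma> $ s $ s') * (norm a)\<^sup>2)"
proof (rule gaussian_law_distrI[OF assms(1)])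
  have [measurable]: "w s \<in> borel_measurable M" for s
    using w by (simp add: gaussian_process_cov_def)
  show "(\<lambda>\<omega>. \<Sum>s\<in>UNIV. c s *\<^sub>R w s \<omega>) \<in> borel_measurable M" by measurable
  fix a :: "(real, 'n) vec"
  have "normal_rv M (\<lambda>\<omega>. \<Sum>s\<in>UNIV. \<Sum>i\<in>UNIV. (c s * a $ i) * (w s \<omega> $ i)) 0
      (\<Sum>s\<in>UNIV. \<Sum>s'\<in>UNIV. \<Sum>i\<in>UNIV. (c s * a $ i) * (c s' * a $ i) * (\<Sigma> $ s $ s'))"
    using w by (simp add: gaussian_process_cov_def)
  moreover have "(\<Sum>s\<in>UNIV. \<Sum>s'\<in>UNIV. \<Sum>i\<in>UNIV. (c s * a $ i) * (c s' * a $ i) * (\<Sigma> $ s $ s')) =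
      (\<Sum>s\<in>UNIV. \<Sum>s'\<in>UNIV. c s * c s' * \<Sigma> $ s $ s') * (norm a)\<^sup>2"
    by (simp add: power2_norm_eq_inner inner_vec_def sum_distrib_left sum_distrib_right mult_ac)
  moreover have "(\<Sum>s\<in>UNIV. \<Sum>i\<in>UNIV. (c s * a $ i) * (w s \<omega> $ i)) = a \<bullet> (\<Sum>s\<in>UNIV. c s *\<^sub>R w s \<omega>)" for \<omega>
    by (simp add: inner_vec_def sum_component sum_distrib_left mult_ac) (rule sum.swap)
  ultimately show "normal_rv M (\<lambda>\<omega>. a \<bullet> (\<Sum>s\<in>UNIV. c s *\<^sub>R w s \<omega>)) 0
      ((\<Sum>s\<in>UNIV. \<Sum>s'\<in>UNIV. c s * c s' * \<Sigma> $ s $ s') * (norm a)\<^sup>2)"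
    by simp
qed

lemma W2_formula_rearrange:
  fixes n \<alpha> \<beta> :: real
  assumes "0 < n"
  shows "(n - 1) / n * (sqrt 2 - 1)\<^sup>2 * \<alpha>\<^sup>2 + n * ((1 + (sqrt 2 - 1) / n) * \<alpha> - \<beta>)\<^sup>2 =
    (sqrt 2 * \<alpha> - \<beta>)\<^sup>2 + (n - 1) * (\<alpha> - \<beta>)\<^sup>2"
  using assms by (simp add: field_simps power2_eq_square)

lemma gaussian_law_GOE_recursion:
  fixes A :: "'w \<Rightarrow> ((real, 'n::{finite,linorder}) vec, 'n) vec" and f :: "'t::{finite,linorder} \<Rightarrow> (real, 'n) vec"
    and t :: 't
  assumes "prob_space M" and "is_GOE M A" and "strictly_upper \<Lambda>"
    and x: "\<And>t \<omega>. \<omega> \<in> space M \<Longrightarrow> x t \<omega> = A \<omega> *v f t + (\<Sum>s\<in>{s. s < t}. \<Lambda> $ s $ t *\<^sub>R x s \<omega>)"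
  defines "v \<equiv> \<Sum>s\<in>UNIV. column t (matrix_inv (mat 1 - \<Lambda>)) $ s *\<^sub>R f s"
  shows "gaussian_law (distr M borel (x t)) (\<lambda>a. ((norm a)\<^sup>2 * (norm v)\<^sup>2 + (a \<bullet> v)\<^sup>2) / real CARD('n))"
proof -
  have "x t \<omega> = A \<omega> *v v" if "\<omega> \<in> space M" for \<omega>
  proof -
    have "x t \<omega> = (\<Sum>s\<in>UNIV. matrix_inv (mat 1 - \<Lambda>) $ s $ t *\<^sub>R (A \<omega> *v f s))"
      by (rule strictly_upper_recursion_solution[OF \<open>strictly_upper \<Lambda>\<close>]) (rule x[OF that])
    then show ?thesis
      by (simp add: v_def column_def matrix_vector_mult_sum_scaleR)
  qed
  then have "distr M borel (x t) = distr M borel (\<lambda>\<omega>. A \<omega> *v v)"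
    by (intro distr_cong[OF refl refl])
  then show ?thesis
    using gaussian_law_GOE_mult_vec[OF assms(1,2)] by simp
qed

lemma gaussian_law_gaussian_process_recursion:
  fixes w y :: "'t::{finite,linorder} \<Rightarrow> 'w \<Rightarrow> (real, 'n::finite) vec" and t :: 't
  assumes "prob_space N" and "gaussian_process_cov N w \<Sigma>" and "strictly_upper \<Gamma>"
    and y: "\<And>t \<omega>. \<omega> \<in> space N \<Longrightarrow> y t \<omega> = (\<Sum>s\<in>{s. s < t}. \<Gamma> $ s $ t *\<^sub>R y s \<omega>) + w t \<omega>"
  defines "c \<equiv> column t (matrix_inv (mat 1 - \<Gamma>))"
  shows "gaussian_law (distr N borel (y t)) (\<lambda>a. (c \<bullet> (\<Sigma> *v c)) * (norm a)\<^sup>2)"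
proof -
  have "y t \<omega> = (\<Sum>s\<in>UNIV. c $ s *\<^sub>R w s \<omega>)" if "\<omega> \<in> space N" for \<omega>
  proof -
    have "y t \<omega> = (\<Sum>s\<in>UNIV. matrix_inv (mat 1 - \<Gamma>) $ s $ t *\<^sub>R w s \<omega>)"
      by (rule strictly_upper_recursion_solution[OF \<open>strictly_upper \<Gamma>\<close>])
        (rule trans[OF y[OF that] add.commute])
    then show ?thesis
      by (simp add: c_def column_def)
  qed
  then have "distr N borel (y t) = distr N borel (\<lambda>\<omega>. \<Sum>s\<in>UNIV. c $ s *\<^sub>R w s \<omega>)"
    by (intro distr_cong[OF refl refl])
  then show ?thesis
    using gaussian_law_gaussian_process_sum[OF assms(1,2), of "\<lambda>s. c $ s"]
    by (simp add: inner_vec_def matrix_vector_mult_def sum_distrib_left mult_ac)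
qed

theorem theorem6:
  fixes M :: "'w measure" and N :: "'v measure"
    and A :: "'w \<Rightarrow> ((real, 'n::{finite,linorder}) vec, 'n) vec"
    and f :: "'t::{finite,linorder} \<Rightarrow> (real, 'n) vec"
    and F :: "((real, 't) vec, 'n) vec"
    and \<Lambda> \<Gamma> \<Sigma> :: "((real, 't) vec, 't) vec"
    and x :: "'t \<Rightarrow> 'w \<Rightarrow> (real, 'n) vec"
    and w y :: "'t \<Rightarrow> 'v \<Rightarrow> (real, 'n) vec"
  assumes "prob_space M" and "prob_space N"
    and F_def: "\<forall>i t. F $ i $ t = f t $ i"
    and "strictly_upper \<Lambda>" and "strictly_upper \<Gamma>"
    and GOE: "is_GOE M A"
    and x_def: "\<forall>t. \<forall>\<omega>\<in>space M. x t \<omega> = A \<omega> *v f t + (\<Sum>s\<in>{s. s < t}. \<Lambda> $ s $ t *\<^sub>R x s \<omega>)"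
    and "psd_matrix \<Sigma>"
    and "gaussian_process_cov N w \<Sigma>"
    and y_def: "\<forall>t. \<forall>\<omega>\<in>space N. y t \<omega> = (\<Sum>s\<in>{s. s < t}. \<Gamma> $ s $ t *\<^sub>R y s \<omega>) + w t \<omega>"
  shows "\<forall>t. let n = real CARD('n);
     \<alpha> = sqrt ((transpose (matrix_inv (mat 1 - \<Lambda>)) ** ((1 / n) *\<^sub>R (transpose F ** F))
                  ** matrix_inv (mat 1 - \<Lambda>)) $ t $ t);
     \<beta> = sqrt ((transpose (matrix_inv (mat 1 - \<Gamma>)) ** \<Sigma> ** matrix_inv (mat 1 - \<Gamma>)) $ t $ t)
   in W2_sq (distr M borel (x t)) (distr N borel (y t))
      = ennreal ((n - 1) / n * (sqrt 2 - 1)\<^sup>2 * \<alpha>\<^sup>2 + n * ((1 + (sqrt 2 - 1) / n) * \<alpha> - \<beta>)\<^sup>2)"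
proof
  fix t :: 't
  define c c' where "c = column t (matrix_inv (mat 1 - \<Lambda>))" and "c' = column t (matrix_inv (mat 1 - \<Gamma>))"
  define v where "v = (\<Sum>s\<in>UNIV. c $ s *\<^sub>R f s)"
  define \<alpha> \<beta> where "\<alpha> = norm v / sqrt (real CARD('n))" and "\<beta> = sqrt (c' \<bullet> (\<Sigma> *v c'))"
  have "0 \<le> c' \<bullet> (\<Sigma> *v c')" using \<open>psd_matrix \<Sigma>\<close> by (simp add: psd_matrix_def)
  then have "W2_sq (distr M borel (x t)) (distr N borel (y t)) =
      ennreal ((sqrt 2 * \<alpha> - \<beta>)\<^sup>2 + (real CARD('n) - 1) * (\<alpha> - \<beta>)\<^sup>2)"
    using W2_sq_rank_one_isotropic_gaussian[of _ v "real CARD('n)" _ \<beta>]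
      gaussian_law_GOE_recursion[OF \<open>prob_space M\<close> GOE \<open>strictly_upper \<Lambda>\<close>, of x f t] x_def
      gaussian_law_gaussian_process_recursion[OF \<open>prob_space N\<close> \<open>gaussian_process_cov N w \<Sigma>\<close>
        \<open>strictly_upper \<Gamma>\<close>, of y t] y_def
    by (simp add: \<alpha>_def \<beta>_def c_def c'_def v_def)
  moreover have "sqrt ((transpose (matrix_inv (mat 1 - \<Lambda>)) ** ((1 / real CARD('n)) *\<^sub>R (transpose F ** F))
      ** matrix_inv (mat 1 - \<Lambda>)) $ t $ t) = \<alpha>"
    using column_Gram_quadratic_form[of F f c] F_def
    by (simp add: transpose_mult_mult_diag c_def[symmetric] v_def[symmetric]
        scaleR_matrix_vector_assoc[symmetric] \<alpha>_def real_sqrt_divide)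
  moreover have "sqrt ((transpose (matrix_inv (mat 1 - \<Gamma>)) ** \<Sigma> ** matrix_inv (mat 1 - \<Gamma>)) $ t $ t) = \<beta>"
    by (simp add: transpose_mult_mult_diag c'_def \<beta>_def)
  ultimately show "let n = real CARD('n);
     \<alpha> = sqrt ((transpose (matrix_inv (mat 1 - \<Lambda>)) ** ((1 / n) *\<^sub>R (transpose F ** F))
                  ** matrix_inv (mat 1 - \<Lambda>)) $ t $ t);
     \<beta> = sqrt ((transpose (matrix_inv (mat 1 - \<Gamma>)) ** \<Sigma> ** matrix_inv (mat 1 - \<Gamma>)) $ t $ t)
   in W2_sq (distr M borel (x t)) (distr N borel (y t))
      = ennreal ((n - 1) / n * (sqrt 2 - 1)\<^sup>2 * \<alpha>\<^sup>2 + n * ((1 + (sqrt 2 - 1) / n) * \<alpha> - \<beta>)\<^sup>2)"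
    unfolding Let_def using W2_formula_rearrange[of "real CARD('n)" \<alpha> \<beta>] by simp
qed

end
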